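(* Let $u=u(x)$ be a fixed (time-independent) analytic change of coordinates on a domain in $\mathbb C^n$. For each $t$ let $\widetilde L_i(u,t)=\partial/\partial u^i+q_i(u,t)-\hbar^{-1}e_i$, $i=1,\dots,n$, be pairwise commuting, and put $\widetilde L_\alpha(x,t)=\sum_i\frac{\partial u^i}{\partial x^\alpha}\widetilde L_i(u(x),t)$ (so $\widetilde L_\alpha=\partial/\partial x^\alpha+q_\alpha(x,t)-\hbar^{-1}a_\alpha(x)$ with $a_\alpha=diag(\partial u^1/\partial x^\alpha,\dots,\partial u^n/\partial x^\alpha)$). Then, for $b\in Diag[\hbar^{-1}]$, $\{\widetilde L_i(u,t)\}$ satisfies $$\frac{\partial\widetilde L_i}{\partial t}=[\widetilde\varphi(b)_{\le0},\widetilde L_i]\quad\text{for all }i$$ if and only if $\{\widetilde L_\alpha(x,t)\}$ satisfies $$\frac{\partial\widetilde L_\alpha}{\partial t}=[\widetilde\varphi(b)_{\le0},\widetilde L_\alpha]\quad\text{for all }\alpha$$ with the same $b$, where in each case $\widetilde\varphi(b)=\widetilde Tb\widetilde T^{-1}$ with $\widetilde T$ the dressing transformation of the respective family.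
   Context: $e_i$ is the matrix unit $(e_i)_{jk}=\delta_{ij}\delta_{ik}$; $q_i,q_\alpha$ are $Mat(n,\mathbb C)$-valued functions; $Diag$ denotes diagonal matrices and $Diag[\hbar^{-1}]$ polynomials in $\hbar^{-1}$ with constant diagonal coefficients. Dressing transformation of $\{\widetilde L_i(u,t)\}$: for each $t$, a formal series $\widetilde T(\hbar,u,t)=Id+\sum_{k\ge1}\hbar^k\widetilde T_k$ with $\widetilde T^{-1}\widetilde L_i\widetilde T=\partial/\partial u^i-e_i\hbar^{-1}+h_i$, $h_i\in Diag[[\hbar]]$ for all $i$; dressing transformation of $\{\widetilde L_\alpha(x,t)\}$: $\widetilde T(\hbar,x,t)=Id+O(\hbar)$ with $\widetilde T^{-1}\widetilde L_\alpha\widetilde T=\partial/\partial x^\alpha-a_\alpha\hbar^{-1}+h_\alpha$, $h_\alpha\in Diag[[\hbar]]$ for all $\alpha$. Such $\widetilde T$ is unique up to right multiplication by diagonal series, so $\widetilde\varphi(b)$ is well defined. For a Laurent series $v=\sum_lv_l\hbar^l$, $v_{\le k}=\sum_{l\le k}v_l\hbar^l$. Conjugation: $T^{-1}(\partial+A)T=\partial+T^{-1}\partial T+T^{-1}AT$; $[\partial+A,M]=\partial M+[A,M]$; $\partial\widetilde L/\partial t$ means the time derivative of the potential term. *)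

theory Defs
  imports "HOL-Analysis.Analysis"
begin

text \<open>Matrices are complex n x n matrices indexed by a finite type 'n; the same
type indexes the coordinates of C^n.  A formal Laurent series in hbar with matrix
coefficients (at a fixed point) is a function int => matrix, the value at k being
the coefficient of hbar^k.\<close>

type_synonym 'n cmat = "complex^'n^'n"
type_synonym 'n ser = "int \<Rightarrow> complex^'n^'n"

definition upd :: "complex^('n::finite) \<Rightarrow> 'n \<Rightarrow> complex \<Rightarrow> complex^'n" where
  "upd p i z = (\<chi> j. if j = i then z else p $ j)"

text \<open>Holomorphic function of several complex variables on an open set
(continuous and holomorphic in each variable separately; Osgood).\<close>
definition holo_n :: "(complex^('n::finite) \<Rightarrow> complex) \<Rightarrow> (complex^('n::finite)) set \<Rightarrow> bool" where
  "holo_n f S \<longleftrightarrow> open S \<and> continuous_on S f \<and>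
     (\<forall>p\<in>S. \<forall>i. (\<lambda>z. f (upd p i z)) field_differentiable (at (p $ i)))"

definition holo_mat :: "(complex^('n::finite) \<Rightarrow> ('n::finite) cmat) \<Rightarrow> (complex^('n::finite)) set \<Rightarrow> bool" where
  "holo_mat f S \<longleftrightarrow> (\<forall>a b. holo_n (\<lambda>p. f p $ a $ b) S)"

definition pd_sc :: "(complex^('n::finite) \<Rightarrow> complex) \<Rightarrow> 'n \<Rightarrow> complex^('n::finite) \<Rightarrow> complex" where
  "pd_sc f i p = deriv (\<lambda>z. f (upd p i z)) (p $ i)"

definition pd :: "(complex^('n::finite) \<Rightarrow> ('n::finite) cmat) \<Rightarrow> 'n \<Rightarrow> complex^('n::finite) \<Rightarrow> ('n::finite) cmat" where
  "pd f i p = (\<chi> a b. pd_sc (\<lambda>p'. f p' $ a $ b) i p)"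

definition munit :: "'n \<Rightarrow> ('n::finite) cmat" where
  "munit i = (\<chi> j k. if j = i \<and> k = i then 1 else 0)"

definition sc :: "complex \<Rightarrow> ('n::finite) cmat \<Rightarrow> ('n::finite) cmat" where
  "sc c M = (\<chi> a b. c * M $ a $ b)"

definition is_diag :: "('n::finite) cmat \<Rightarrow> bool" where
  "is_diag M \<longleftrightarrow> (\<forall>a b. a \<noteq> b \<longrightarrow> M $ a $ b = 0)"

definition lbdd :: "('n::finite) ser \<Rightarrow> bool" where
  "lbdd s \<longleftrightarrow> (\<exists>N. \<forall>k<N. s k = 0)"

definition smul :: "('n::finite) ser \<Rightarrow> ('n::finite) ser \<Rightarrow> ('n::finite) ser" where
  "smul a b = (\<lambda>k. \<Sum>j\<in>{j. a j \<noteq> 0 \<and> b (k - j) \<noteq> 0}. a j ** b (k - j))"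

definition sone :: "('n::finite) ser" where
  "sone = (\<lambda>k. if k = 0 then mat 1 else 0)"

definition sinv :: "('n::finite) ser \<Rightarrow> ('n::finite) ser" where
  "sinv a = (SOME c. lbdd c \<and> smul a c = sone \<and> smul c a = sone)"

definition trunc0 :: "('n::finite) ser \<Rightarrow> ('n::finite) ser" where
  "trunc0 s = (\<lambda>k. if k \<le> 0 then s k else 0)"

text \<open>Potential of the operator  d/dp^j + Q_j - hbar^{-1} E_j  as a Laurent series.\<close>
definition pot :: "('n::finite) cmat \<Rightarrow> ('n::finite) cmat \<Rightarrow> ('n::finite) ser" where
  "pot Q E = (\<lambda>k. if k = 0 then Q else if k = -1 then - E else 0)"

text \<open>Family of operators L_j = d/dp^j + Q j p - hbar^{-1} E j p  on the open set S.
Pairwise commutation [L_i, L_j] = 0, written out via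
[d_i + A, d_j + B] = d_i B - d_j A + [A, B].\<close>
definition commuting ::
  "(complex^('n::finite)) set \<Rightarrow> ('n \<Rightarrow> complex^('n::finite) \<Rightarrow> ('n::finite) cmat) \<Rightarrow> ('n \<Rightarrow> complex^('n::finite) \<Rightarrow> ('n::finite) cmat) \<Rightarrow> bool" where
  "commuting S Q E \<longleftrightarrow> (\<forall>i j. \<forall>p\<in>S. \<forall>k.
      pd (\<lambda>p'. pot (Q j p') (E j p') k) i p - pd (\<lambda>p'. pot (Q i p') (E i p') k) j p
      + smul (pot (Q i p) (E i p)) (pot (Q j p) (E j p)) k
      - smul (pot (Q j p) (E j p)) (pot (Q i p) (E i p)) k = 0)"

text \<open>T (a series with function coefficients T k p) is a dressing transformation of the
family: T = Id + O(hbar) with analytic coefficients, and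
T^{-1} L_j T = d/dp^j - hbar^{-1} E_j + h_j with h_j in Diag[[hbar]], for all j.
Since T is invertible this is written as L_j o T = T o (d_j - hbar^{-1}E_j + h_j),
i.e.  d_j T + A_j T = T (-hbar^{-1} E_j + h_j).\<close>
definition dressing ::
  "(complex^('n::finite)) set \<Rightarrow> ('n \<Rightarrow> complex^('n::finite) \<Rightarrow> ('n::finite) cmat) \<Rightarrow> ('n \<Rightarrow> complex^('n::finite) \<Rightarrow> ('n::finite) cmat)
   \<Rightarrow> (int \<Rightarrow> complex^('n::finite) \<Rightarrow> ('n::finite) cmat) \<Rightarrow> bool" where
  "dressing S Q E T \<longleftrightarrow>
     (\<forall>p\<in>S. T 0 p = mat 1) \<and> (\<forall>k<0. \<forall>p\<in>S. T k p = 0) \<and> (\<forall>k. holo_mat (T k) S) \<and>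
     (\<exists>h :: 'n \<Rightarrow> int \<Rightarrow> complex^('n::finite) \<Rightarrow> ('n::finite) cmat.
        (\<forall>j k p. is_diag (h j k p)) \<and> (\<forall>j. \<forall>k<0. \<forall>p. h j k p = 0) \<and>
        (\<forall>j. \<forall>p\<in>S. \<forall>k.
           pd (\<lambda>p'. T k p') j p + smul (pot (Q j p) (E j p)) (\<lambda>l. T l p) k
           = smul (\<lambda>l. T l p) (\<lambda>l. (if l = -1 then - E j p else 0) + h j l p) k))"

definition phi :: "(int \<Rightarrow> complex^('n::finite) \<Rightarrow> ('n::finite) cmat) \<Rightarrow> ('n::finite) ser \<Rightarrow> complex^('n::finite) \<Rightarrow> ('n::finite) ser" where
  "phi T b p = smul (smul (\<lambda>k. T k p) b) (sinv (\<lambda>k. T k p))"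

text \<open>b in Diag[hbar^{-1}]: polynomial in hbar^{-1} with constant diagonal coefficients.\<close>
definition diag_poly_inv :: "('n::finite) ser \<Rightarrow> bool" where
  "diag_poly_inv b \<longleftrightarrow> (\<forall>k. is_diag (b k)) \<and> (\<forall>k>0. b k = 0) \<and> lbdd b"

text \<open>The flow  dL_j/dt = [phi(b)_{<=0}, L_j]  for all j, on S x Theta, where
Q j p t, T t k p depend on time t, and
[M, d_j + A] = - d_j M + M A - A M.  The left side is the time derivative of the
potential (only its hbar^0 coefficient Q_j depends on t).\<close>
definition flow ::
  "(complex^('n::finite)) set \<Rightarrow> complex set \<Rightarrow> ('n \<Rightarrow> complex^('n::finite) \<Rightarrow> complex \<Rightarrow> ('n::finite) cmat)
   \<Rightarrow> ('n \<Rightarrow> complex^('n::finite) \<Rightarrow> ('n::finite) cmat) \<Rightarrow> (complex \<Rightarrow> int \<Rightarrow> complex^('n::finite) \<Rightarrow> ('n::finite) cmat) \<Rightarrow> ('n::finite) ser \<Rightarrow> bool" where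
  "flow S Th Q E T b \<longleftrightarrow> (\<forall>j. \<forall>p\<in>S. \<forall>t\<in>Th.
     (let M = (\<lambda>p'. trunc0 (phi (T t) b p'));
          A = pot (Q j p t) (E j p);
          R = (\<lambda>k. - pd (\<lambda>p'. M p' k) j p + smul (M p) A k - smul A (M p) k)
      in (\<forall>a c. ((\<lambda>s. Q j p s $ a $ c) has_field_derivative (R 0 $ a $ c)) (at t))
         \<and> (\<forall>k. k \<noteq> 0 \<longrightarrow> R k = 0)))"

definition jac :: "(complex^('n::finite) \<Rightarrow> complex^('n::finite)) \<Rightarrow> 'n \<Rightarrow> 'n \<Rightarrow> complex^('n::finite) \<Rightarrow> complex" where
  "jac u i \<alpha> x = pd_sc (\<lambda>y. u y $ i) \<alpha> x"

definition Qx :: "(complex^('n::finite) \<Rightarrow> complex^('n::finite)) \<Rightarrow> ('n \<Rightarrow> complex^('n::finite) \<Rightarrow> complex \<Rightarrow> ('n::finite) cmat)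
   \<Rightarrow> ('n \<Rightarrow> complex^('n::finite) \<Rightarrow> complex \<Rightarrow> ('n::finite) cmat)" where
  "Qx u q = (\<lambda>\<alpha> x t. \<Sum>i\<in>UNIV. sc (jac u i \<alpha> x) (q i (u x) t))"

definition Ax :: "(complex^('n::finite) \<Rightarrow> complex^('n::finite)) \<Rightarrow> ('n \<Rightarrow> complex^('n::finite) \<Rightarrow> ('n::finite) cmat)" where
  "Ax u = (\<lambda>\<alpha> x. (\<chi> a c. if a = c then jac u a \<alpha> x else 0))"

end

theory Submission
  imports Defs "HOL-Complex_Analysis.Cauchy_Integral_Formula"
begin

text \<open>
  Dressing equations are linear in the family, so the pullback S = T o u of a dressing
  transformation T of the L_i dresses L_alpha = sum_i (du^i/dx^alpha) L_i. Two dressing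
  transformations T', S of the same family differ by a right factor D = S^{-1} T', and comparing
  their dressing equations gives, order by order in hbar, [a_alpha, D_(k+1)] = (terms in D_0, ...,
  D_k only). As the Jacobian is invertible, the diagonal matrices a_alpha separate the indices, so
  D is diagonal by induction; D then commutes with b, whence phi'(b) = phi(b) o u. By the chain rule
  both sides of the x-flow are the Jacobian combinations of the two sides of the u-flow, and
  inverting the Jacobian gives the converse. The chain rule for continuous, separately holomorphic
  maps rests on Osgood's lemma, proved here by writing difference quotients as Cauchy integrals.
\<close>


section \<open>Separately holomorphic functions\<close>

lemma upd_nth [simp]: "upd p i z $ j = (if j = i then z else p $ j)"
  by (simp add: upd_def)

lemma upd_upd [simp]: "upd (upd p i a) i b = upd p i b"
  by (simp add: vec_eq_iff)

lemma upd_triv [simp]: "upd p i (p $ i) = p"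
  by (simp add: vec_eq_iff)

lemma norm_upd_diff_le:
  fixes w p :: "complex^'n"
  shows "norm (upd w i z - p) \<le> norm (w - p) + norm (z - p $ i)"
proof -
  have decomp: "upd w i z - p = (upd w i (p $ i) - p) + axis i (z - p $ i)"
    by (simp add: vec_eq_iff axis_def)
  have "norm (upd w i (p $ i) - p) \<le> norm (w - p)"
    by (rule norm_le_componentwise_cart) auto
  moreover have "norm (axis i (z - p $ i) :: complex^'n) = norm (z - p $ i)"
    unfolding norm_vec_def L2_set_def axis_def
    by (simp add: if_distrib[of "\<lambda>y. (norm y)\<^sup>2"] cong: if_cong)
  ultimately show ?thesis
    unfolding decomp by (metis add_mono norm_triangle_ineq order_trans order_refl)
qed

lemma continuous_on_upd [continuous_intros]:
  fixes f :: "_ \<Rightarrow> complex^'n"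
  assumes "continuous_on S f" "continuous_on S g"
  shows "continuous_on S (\<lambda>x. upd (f x) i (g x))"
  unfolding upd_def
proof (intro continuous_on_vec_lambda)
  show "continuous_on S (\<lambda>x. if j = i then g x else f x $ j)" for j
    using assms by (cases "j = i") (simp_all add: continuous_on_component)
qed

lemma continuous_on_line: "continuous_on S (\<lambda>z. upd p i z)"
  by (intro continuous_on_upd continuous_on_const continuous_on_id)

lemma open_line_preimage: "open S \<Longrightarrow> open {z. upd p i z \<in> S}"
  using open_vimage[OF _ continuous_on_line] by (simp add: vimage_def)

lemma holo_n_line:
  assumes "holo_n G U"
  shows "continuous_on {z. upd w i z \<in> U} (\<lambda>z. G (upd w i z))"
    and "(\<lambda>z. G (upd w i z)) holomorphic_on {z. upd w i z \<in> U}"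
proof -
  show "continuous_on {z. upd w i z \<in> U} (\<lambda>z. G (upd w i z))"
    by (rule continuous_on_compose2[OF _ continuous_on_line]) (use assms in \<open>auto simp: holo_n_def\<close>)
  have "(\<lambda>\<zeta>. G (upd (upd w i z) i \<zeta>)) field_differentiable at (upd w i z $ i)" if "upd w i z \<in> U" for z
    using assms that unfolding holo_n_def by blast
  then show "(\<lambda>z. G (upd w i z)) holomorphic_on {z. upd w i z \<in> U}"
    by (simp add: holomorphic_on_def field_differentiable_at_within)
qed

lemma contour_integral_circlepath_difference_quotient:
  fixes g :: "complex \<Rightarrow> complex"
  assumes cont: "continuous_on (cball c r) g" and holo: "g holomorphic_on ball c r"
    and b: "b \<in> ball c r"
  shows "contour_integral (circlepath c r) (\<lambda>\<zeta>. g \<zeta> / ((\<zeta> - c) * (\<zeta> - b)))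
    = 2 * pi * \<i> * (if b = c then deriv g c else (g b - g c) / (b - c))"
proof (cases "b = c")
  case True
  have "((\<lambda>\<zeta>. g \<zeta> / (\<zeta> - c) ^ Suc 1) has_contour_integral (2 * pi * \<i> / fact 1 * (deriv ^^ 1) g c))
      (circlepath c r)"
    using b True by (intro Cauchy_has_contour_integral_higher_derivative_circlepath cont holo) auto
  then show ?thesis
    using True by (simp add: power2_eq_square contour_integral_unique)
next
  case False
  have "norm (b - c) < r" using b by (simp add: dist_norm norm_minus_commute)
  moreover have r: "0 < r" using b by (meson dist_not_less_zero le_less_trans mem_ball not_le)
  ultimately have "((\<lambda>\<zeta>. g \<zeta> / (\<zeta> - c)) has_contour_integral 2 * pi * \<i> * g c) (circlepath c r)"
      "((\<lambda>\<zeta>. g \<zeta> / (\<zeta> - b)) has_contour_integral 2 * pi * \<i> * g b) (circlepath c r)"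
    using Cauchy_integral_circlepath[OF cont holo] by simp_all
  then have "((\<lambda>\<zeta>. (g \<zeta> / (\<zeta> - c) - g \<zeta> / (\<zeta> - b)) / (c - b)) has_contour_integral
      ((2 * pi * \<i> * g c - 2 * pi * \<i> * g b) / (c - b))) (circlepath c r)"
    by (intro has_contour_integral_div has_contour_integral_diff)
  moreover have "(g \<zeta> / (\<zeta> - c) - g \<zeta> / (\<zeta> - b)) / (c - b) = g \<zeta> / ((\<zeta> - c) * (\<zeta> - b))"
    if "\<zeta> \<in> path_image (circlepath c r)" for \<zeta>
  proof -
    have "norm (\<zeta> - c) = r" using that r by (auto simp: dist_norm norm_minus_commute)
    then have "\<zeta> - c \<noteq> 0" "\<zeta> - b \<noteq> 0" "c - b \<noteq> 0" using r \<open>norm (b - c) < r\<close> False by auto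
    then show ?thesis by (simp add: divide_simps) (simp add: algebra_simps)
  qed
  ultimately have "((\<lambda>\<zeta>. g \<zeta> / ((\<zeta> - c) * (\<zeta> - b))) has_contour_integral
      ((2 * pi * \<i> * g c - 2 * pi * \<i> * g b) / (c - b))) (circlepath c r)"
    by (rule has_contour_integral_eq)
  moreover have "(2 * pi * \<i> * g c - 2 * pi * \<i> * g b) / (c - b) = 2 * pi * \<i> * ((g b - g c) / (b - c))"
    using False by (simp add: field_simps)
  ultimately show ?thesis
    using False by (simp add: contour_integral_unique)
qed

lemma isCont_contour_integral_circlepath:
  fixes H :: "'a::{heine_borel,perfect_space} \<Rightarrow> complex \<Rightarrow> complex"
  assumes cont: "continuous_on (cball w0 \<rho> \<times> sphere c r) (\<lambda>(w, \<zeta>). H w \<zeta>)"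
    and \<rho>: "\<rho> > 0" and r: "r > 0"
  shows "isCont (\<lambda>w. contour_integral (circlepath c r) (H w)) w0"
proof -
  let ?K = "cball w0 \<rho> \<times> sphere c r"
  have ucont: "uniformly_continuous_on ?K (\<lambda>(w, \<zeta>). H w \<zeta>)"
    by (intro compact_uniformly_continuous cont compact_Times compact_cball compact_sphere)
  have near: "\<forall>\<^sub>F w in at w0. dist w w0 < d" if "d > 0" for d
    using that by (auto simp: eventually_at)
  have "uniform_limit (sphere c r) H (H w0) (at w0)"
    unfolding uniform_limit_iff
  proof (intro allI impI)
    fix \<epsilon> :: real assume "\<epsilon> > 0"
    with ucont obtain d where "d > 0" and d: "\<And>x x'. x \<in> ?K \<Longrightarrow> x' \<in> ?K \<Longrightarrow> dist x' x < d \<Longrightarrow>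
        dist ((\<lambda>(w, \<zeta>). H w \<zeta>) x') ((\<lambda>(w, \<zeta>). H w \<zeta>) x) < \<epsilon>"
      unfolding uniformly_continuous_on_def by metis
    have "\<forall>\<^sub>F w in at w0. dist w w0 < min d \<rho>" using \<open>d > 0\<close> \<rho> by (intro near) simp
    then show "\<forall>\<^sub>F w in at w0. \<forall>\<zeta>\<in>sphere c r. dist (H w \<zeta>) (H w0 \<zeta>) < \<epsilon>"
    proof eventually_elim
      case (elim w)
      show ?case
      proof
        fix \<zeta> assume "\<zeta> \<in> sphere c r"
        with elim have "(w, \<zeta>) \<in> ?K" "(w0, \<zeta>) \<in> ?K" "dist (w, \<zeta>) (w0, \<zeta>) < d"
          using \<rho> by (auto simp: dist_commute dist_Pair_Pair)
        then show "dist (H w \<zeta>) (H w0 \<zeta>) < \<epsilon>" using d by fastforce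
      qed
    qed
  qed
  moreover have "\<forall>\<^sub>F w in at w0. H w contour_integrable_on circlepath c r"
    using near[OF \<rho>]
  proof eventually_elim
    case (elim w)
    have "continuous_on (sphere c r) ((\<lambda>(w, \<zeta>). H w \<zeta>) \<circ> (\<lambda>\<zeta>. (w, \<zeta>)))"
      using elim by (intro continuous_on_compose continuous_intros continuous_on_subset[OF cont])
        (auto simp: dist_commute)
    then show ?case
      using r by (intro contour_integrable_continuous_circlepath) (simp_all add: o_def)
  qed
  ultimately have "((\<lambda>w. contour_integral (circlepath c r) (H w))
      \<longlongrightarrow> contour_integral (circlepath c r) (H w0)) (at w0)"
    using r by (intro contour_integral_uniform_limit_circlepath(2)) auto
  then show ?thesis by (simp add: isCont_def)
qed

lemma holo_n_cauchy_quotient: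
  assumes G: "holo_n G U" and sub: "cball c r \<subseteq> {\<zeta>. upd w i \<zeta> \<in> U}" and b: "b \<in> ball c r"
  shows "contour_integral (circlepath c r) (\<lambda>\<zeta>. G (upd w i \<zeta>) / ((\<zeta> - c) * (\<zeta> - b)))
    = 2 * pi * \<i> * (if b = c then deriv (\<lambda>\<zeta>. G (upd w i \<zeta>)) c
                     else (G (upd w i b) - G (upd w i c)) / (b - c))"
proof (rule contour_integral_circlepath_difference_quotient[OF _ _ b])
  show "continuous_on (cball c r) (\<lambda>\<zeta>. G (upd w i \<zeta>))"
    using continuous_on_subset[OF holo_n_line(1)[OF G] sub] .
  show "(\<lambda>\<zeta>. G (upd w i \<zeta>)) holomorphic_on ball c r"
    using holomorphic_on_subset[OF holo_n_line(2)[OF G]] sub ball_subset_cball by blast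
qed

lemma continuous_on_cauchy_kernel:
  assumes G: "holo_n G U" and sub: "cball p (\<rho> + r) \<subseteq> U" and "\<rho> < r"
  shows "continuous_on (cball (p, p $ i) \<rho> \<times> sphere (p $ i) r)
    (\<lambda>((w, b), \<zeta>). G (upd w i \<zeta>) / ((\<zeta> - p $ i) * (\<zeta> - b)))"
proof -
  let ?K = "cball (p, p $ i) \<rho> \<times> sphere (p $ i) r"
  have near: "norm (fst (fst x) - p) \<le> \<rho>" "norm (snd (fst x) - p $ i) \<le> \<rho>" "norm (snd x - p $ i) = r"
    if "x \<in> ?K" for x
  proof -
    have "dist (fst x) (p, p $ i) \<le> \<rho>" "dist (snd x) (p $ i) = r"
      using that by (auto simp: dist_commute)
    moreover have "dist (fst (fst x)) p \<le> dist (fst x) (p, p $ i)"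
      "dist (snd (fst x)) (p $ i) \<le> dist (fst x) (p, p $ i)"
      using dist_fst_le[of "fst x" "(p, p $ i)"] dist_snd_le[of "fst x" "(p, p $ i)"] by simp_all
    ultimately show "norm (fst (fst x) - p) \<le> \<rho>" "norm (snd (fst x) - p $ i) \<le> \<rho>"
      "norm (snd x - p $ i) = r"
      unfolding dist_norm by linarith+
  qed
  have img: "(\<lambda>x. upd (fst (fst x)) i (snd x)) ` ?K \<subseteq> U"
  proof (rule image_subsetI)
    fix x assume "x \<in> ?K"
    then have "norm (upd (fst (fst x)) i (snd x) - p) \<le> \<rho> + r"
      using near norm_upd_diff_le[of "fst (fst x)" i "snd x" p] by fastforce
    then show "upd (fst (fst x)) i (snd x) \<in> U"
      using sub by (auto simp: dist_norm norm_minus_commute)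
  qed
  have "continuous_on U G" using G by (simp add: holo_n_def)
  then have "continuous_on ?K (\<lambda>x. G (upd (fst (fst x)) i (snd x)))"
    by (rule continuous_on_compose2[OF _ _ img]) (intro continuous_intros)
  moreover have "(snd x - p $ i) * (snd x - snd (fst x)) \<noteq> 0" if "x \<in> ?K" for x
  proof -
    have "0 \<le> \<rho>" using near(1)[OF that] norm_ge_zero order_trans by blast
    then show ?thesis using near[OF that] \<open>\<rho> < r\<close> by auto
  qed
  ultimately show ?thesis
    unfolding case_prod_unfold by (intro continuous_on_divide continuous_intros) auto
qed

text \<open>The difference quotient of G along the coordinate i is a Cauchy integral over a fixed
  circle, hence depends continuously on all variables jointly.\<close>

lemma holo_n_partial_caratheodory:
  assumes G: "holo_n G U" and p: "p \<in> U"
  obtains Q where "isCont Q (p, p $ i)" and "Q (p, p $ i) = pd_sc G i p"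
    and "\<forall>\<^sub>F wz in nhds (p, p $ i).
           G (upd (fst wz) i (snd wz)) - G (upd (fst wz) i (p $ i)) = (snd wz - p $ i) * Q wz"
proof -
  obtain e where e: "e > 0" "cball p e \<subseteq> U"
    using G p by (meson holo_n_def open_contains_cball)
  define c where "c = p $ i"
  define H where "H = (\<lambda>(w, b) \<zeta>. G (upd w i \<zeta>) / ((\<zeta> - c) * (\<zeta> - b)))"
  define Q where "Q = (\<lambda>wb. contour_integral (circlepath c (e / 2)) (H wb) / (2 * pi * \<i>))"
  have Q_eq: "Q (w, b) = (if b = c then deriv (\<lambda>\<zeta>. G (upd w i \<zeta>)) c
      else (G (upd w i b) - G (upd w i c)) / (b - c))"
    if w: "norm (w - p) \<le> e / 4" and b: "b \<in> ball c (e / 2)" for w b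
  proof -
    have "cball c (e / 2) \<subseteq> {\<zeta>. upd w i \<zeta> \<in> U}"
    proof
      fix \<zeta> assume "\<zeta> \<in> cball c (e / 2)"
      then have "norm (\<zeta> - p $ i) \<le> e / 2" by (simp add: c_def dist_norm norm_minus_commute)
      then have "norm (upd w i \<zeta> - p) \<le> e" using norm_upd_diff_le[of w i \<zeta> p] w e(1) by linarith
      then show "\<zeta> \<in> {\<zeta>. upd w i \<zeta> \<in> U}" using e(2) by (auto simp: dist_norm norm_minus_commute)
    qed
    from holo_n_cauchy_quotient[OF G this b] show ?thesis
      by (simp add: Q_def H_def)
  qed
  show thesis
  proof
    show "Q (p, p $ i) = pd_sc G i p"
      using Q_eq[of p c] e(1) by (simp add: pd_sc_def c_def)
    have "\<forall>\<^sub>F wz in nhds (p, c). dist wz (p, c) < e / 4"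
      using e(1) by (intro eventually_nhds_metric[THEN iffD2] exI[of _ "e / 4"]) auto
    then show "\<forall>\<^sub>F wz in nhds (p, p $ i).
        G (upd (fst wz) i (snd wz)) - G (upd (fst wz) i (p $ i)) = (snd wz - p $ i) * Q wz"
      unfolding c_def[symmetric]
    proof eventually_elim
      case (elim wz)
      obtain w b where wz: "wz = (w, b)" by fastforce
      have "dist w p \<le> dist wz (p, c)" "dist b c \<le> dist wz (p, c)"
        using dist_fst_le[of wz "(p, c)"] dist_snd_le[of wz "(p, c)"] by (simp_all add: wz)
      then have "norm (w - p) \<le> e / 4" "b \<in> ball c (e / 2)"
        using elim e(1) by (simp_all add: dist_norm norm_minus_commute)
      then show ?case by (cases "b = c") (simp_all add: wz Q_eq)
    qed
    have "continuous_on (cball (p, c) (e / 4) \<times> sphere c (e / 2)) (\<lambda>(wb, \<zeta>). H wb \<zeta>)"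
    proof -
      have "cball p (e / 4 + e / 2) \<subseteq> U" using e subset_cball[of "e / 4 + e / 2" e p] by simp
      from continuous_on_cauchy_kernel[OF G this] e(1) show ?thesis
        by (simp add: H_def c_def case_prod_unfold)
    qed
    then have "isCont (\<lambda>wb. contour_integral (circlepath c (e / 2)) (H wb)) (p, c)"
      by (rule isCont_contour_integral_circlepath) (use e(1) in auto)
    then show "isCont Q (p, p $ i)"
      unfolding Q_def c_def[symmetric] by (intro continuous_intros) auto
  qed
qed

lemma holo_n_upd_derivative:
  assumes G: "holo_n G U" and p: "p \<in> U"
    and w: "(w \<longlongrightarrow> p) (at z0)" "w z0 = p" "\<And>z. w z $ i = p $ i"
    and Gw: "((\<lambda>z. G (w z)) has_field_derivative D) (at z0)"
    and g: "(g has_field_derivative g') (at z0)" "g z0 = p $ i"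
  shows "((\<lambda>z. G (upd (w z) i (g z))) has_field_derivative g' * pd_sc G i p + D) (at z0)"
proof -
  obtain Q where Q: "isCont Q (p, p $ i)" "Q (p, p $ i) = pd_sc G i p"
    "\<forall>\<^sub>F wz in nhds (p, p $ i).
       G (upd (fst wz) i (snd wz)) - G (upd (fst wz) i (p $ i)) = (snd wz - p $ i) * Q wz"
    using holo_n_partial_caratheodory[OF G p] by blast
  have "(g \<longlongrightarrow> p $ i) (at z0)"
    using DERIV_isCont[OF g(1)] g(2) by (simp add: isCont_def)
  with w(1) have lim: "((\<lambda>z. (w z, g z)) \<longlongrightarrow> (p, p $ i)) (at z0)"
    by (rule tendsto_Pair)
  have "\<forall>\<^sub>F z in at z0. (G (upd (w z) i (g z)) - G (upd (w z0) i (g z0))) / (z - z0)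
      = (g z - g z0) / (z - z0) * Q (w z, g z) + (G (w z) - G (w z0)) / (z - z0)"
    using eventually_compose_filterlim[OF Q(3) lim]
  proof eventually_elim
    case (elim z)
    have "upd (w z) i (p $ i) = w z" "upd (w z0) i (g z0) = p"
      using w(2) w(3)[of z] g(2) by (metis upd_triv)+
    with elim show ?case
      using w(2) g(2) by (simp add: diff_eq_eq add_diff_eq[symmetric] add_divide_distrib)
  qed
  moreover have "((\<lambda>z. (g z - g z0) / (z - z0) * Q (w z, g z) + (G (w z) - G (w z0)) / (z - z0))
      \<longlongrightarrow> g' * pd_sc G i p + D) (at z0)"
    using g(1) Gw Q(2) isCont_tendsto_compose[OF Q(1) lim]
    by (intro tendsto_add tendsto_mult) (simp_all add: has_field_derivative_iff)
  ultimately show ?thesis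
    by (simp add: has_field_derivative_iff tendsto_cong)
qed

lemma holo_n_chain_rule:
  fixes G :: "complex^'n \<Rightarrow> complex" and \<gamma> :: "complex \<Rightarrow> complex^'n"
  assumes G: "holo_n G U" and \<gamma>: "\<And>j. ((\<lambda>z. \<gamma> z $ j) has_field_derivative \<gamma>' j) (at z0)"
    and in_U: "\<gamma> z0 \<in> U"
  shows "((\<lambda>z. G (\<gamma> z)) has_field_derivative (\<Sum>j\<in>UNIV. pd_sc G j (\<gamma> z0) * \<gamma>' j)) (at z0)"
proof -
  define p where "p = \<gamma> z0"
  define mix where "mix I z = (\<chi> j. if j \<in> I then \<gamma> z $ j else p $ j)" for I z
  have "((\<lambda>z. G (mix I z)) has_field_derivative (\<Sum>j\<in>I. pd_sc G j p * \<gamma>' j)) (at z0)"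
    if "finite I" for I
    using that
  proof (induction I rule: finite_induct)
    case empty
    have "mix {} = (\<lambda>z. p)" by (simp add: mix_def fun_eq_iff vec_eq_iff)
    then show ?case by simp
  next
    case (insert i I)
    have "isCont (\<lambda>z. \<gamma> z $ j) z0" for j using \<gamma> by (rule DERIV_isCont)
    then have "(mix I \<longlongrightarrow> mix I z0) (at z0)"
      unfolding mix_def by (intro tendsto_vec_lambda) (auto simp: isCont_def)
    moreover have "mix I z0 = p" "mix I z $ i = p $ i" for z
      using insert.hyps by (auto simp: mix_def p_def vec_eq_iff)
    ultimately have "((\<lambda>z. G (upd (mix I z) i (\<gamma> z $ i))) has_field_derivative
        \<gamma>' i * pd_sc G i p + (\<Sum>j\<in>I. pd_sc G j p * \<gamma>' j)) (at z0)"
      using holo_n_upd_derivative[OF G in_U[folded p_def] _ _ _ insert.IH \<gamma>] by (simp add: p_def)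
    moreover have "upd (mix I z) i (\<gamma> z $ i) = mix (insert i I) z" for z
      by (simp add: mix_def vec_eq_iff)
    ultimately show ?case
      using insert.hyps by (simp add: mult.commute)
  qed
  moreover have "mix UNIV = \<gamma>" by (simp add: mix_def fun_eq_iff vec_eq_iff)
  ultimately show ?thesis by (metis finite_class.finite_UNIV p_def)
qed

section \<open>Formal Laurent series with matrix coefficients\<close>

definition vanishes_below :: "int \<Rightarrow> ('n::finite) ser \<Rightarrow> bool" where
  "vanishes_below N a \<longleftrightarrow> (\<forall>k<N. a k = 0)"

lemma vanishes_below_mono: "vanishes_below N a \<Longrightarrow> M \<le> N \<Longrightarrow> vanishes_below M a"
  by (auto simp: vanishes_below_def)

lemma lbdd_iff_vanishes_below: "lbdd a \<longleftrightarrow> (\<exists>N. vanishes_below N a)"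
  by (simp add: lbdd_def vanishes_below_def)

lemma vanishes_below_add: "vanishes_below N a \<Longrightarrow> vanishes_below N c \<Longrightarrow> vanishes_below N (\<lambda>k. a k + c k)"
  by (simp add: vanishes_below_def)

lemma vanishes_below_diff: "vanishes_below N a \<Longrightarrow> vanishes_below N c \<Longrightarrow> vanishes_below N (\<lambda>k. a k - c k)"
  by (simp add: vanishes_below_def)

lemma vanishes_below_pot: "vanishes_below (-1) (pot Q E)"
  by (simp add: vanishes_below_def pot_def)

lemma matrix_add_rdistrib: "((A::'a::comm_semiring_1^'n^'m) + B) ** C = A ** C + B ** C"
  by (vector matrix_matrix_mult_def sum.distrib[symmetric] field_simps)

lemma matrix_diff_ldistrib: "(A::'a::comm_ring_1^'n^'m) ** (B - C) = A ** B - A ** C"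
  by (vector matrix_matrix_mult_def sum_subtractf[symmetric] field_simps)

lemma matrix_neg_mult: "(- (A::'a::comm_ring_1^'n^'m)) ** C = - (A ** C)"
  by (vector matrix_matrix_mult_def sum_negf[symmetric] field_simps)

lemma matrix_mult_neg: "(A::'a::comm_ring_1^'n^'m) ** (- C) = - (A ** C)"
  by (vector matrix_matrix_mult_def sum_negf[symmetric] field_simps)

lemma matrix_sum_mult: "(\<Sum>x\<in>A. f x) ** (B::'a::comm_semiring_1^'n^'m) = (\<Sum>x\<in>A. f x ** B)"
  by (induction A rule: infinite_finite_induct) (auto simp: matrix_add_rdistrib)

lemma matrix_mult_sum: "(B::'a::comm_semiring_1^'n^'m) ** (\<Sum>x\<in>A. f x) = (\<Sum>x\<in>A. B ** f x)"
  by (induction A rule: infinite_finite_induct) (auto simp: matrix_add_ldistrib)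

text \<open>smul sums over the support of the Cauchy product, which is infinite (and the sum 0) unless
  the factors are bounded below; hence the bounds in the lemmas below.\<close>

lemma smul_eq_sum_superset:
  assumes "finite A" "\<And>j. a j \<noteq> 0 \<Longrightarrow> c (k - j) \<noteq> 0 \<Longrightarrow> j \<in> A"
  shows "smul a c k = (\<Sum>j\<in>A. a j ** c (k - j))"
  unfolding smul_def using assms by (intro sum.mono_neutral_left) auto

lemma smul_eq_sum_interval:
  assumes "vanishes_below N a" "vanishes_below M c"
  shows "smul a c k = (\<Sum>j\<in>{N..k-M}. a j ** c (k - j))"
  using assms by (intro smul_eq_sum_superset) (auto simp: vanishes_below_def not_less[symmetric])

lemma vanishes_below_smul:
  assumes "vanishes_below N a" "vanishes_below M c"
  shows "vanishes_below (N + M) (smul a c)"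
  unfolding vanishes_below_def smul_eq_sum_interval[OF assms] by auto

lemma smul_at_0: "vanishes_below 0 a \<Longrightarrow> vanishes_below 0 c \<Longrightarrow> smul a c 0 = a 0 ** c 0"
  by (simp add: smul_eq_sum_interval[of 0 a 0 c])

lemma smul_sone_left [simp]: "smul sone a = a"
  by (rule ext, subst smul_eq_sum_superset[of "{0}"]) (auto simp: sone_def split: if_splits)

lemma smul_sone_right [simp]: "smul a sone = a"
  by (rule ext, subst smul_eq_sum_superset[of "{k}" for k]) (auto simp: sone_def split: if_splits)

lemma smul_zero_right [simp]: "smul a (\<lambda>_. 0) = (\<lambda>_. 0)"
  by (simp add: smul_def fun_eq_iff)

lemma smul_add_left:
  assumes "vanishes_below N c" "vanishes_below N d" "vanishes_below M a"
  shows "smul (\<lambda>k. c k + d k) a k = smul c a k + smul d a k"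
  using assms by (simp add: smul_eq_sum_interval[OF vanishes_below_add[OF assms(1,2)] assms(3)]
      smul_eq_sum_interval[of N _ M] matrix_add_rdistrib sum.distrib)

lemma smul_add_right:
  assumes "vanishes_below N a" "vanishes_below M c" "vanishes_below M d"
  shows "smul a (\<lambda>k. c k + d k) k = smul a c k + smul a d k"
  using assms by (simp add: smul_eq_sum_interval[OF assms(1) vanishes_below_add[OF assms(2,3)]]
      smul_eq_sum_interval[of N a M] matrix_add_ldistrib sum.distrib)

lemma smul_diff_right:
  assumes "vanishes_below N a" "vanishes_below M c" "vanishes_below M d"
  shows "smul a (\<lambda>k. c k - d k) k = smul a c k - smul a d k"
  using assms by (simp add: smul_eq_sum_interval[OF assms(1) vanishes_below_diff[OF assms(2,3)]]
      smul_eq_sum_interval[of N a M] matrix_diff_ldistrib sum_subtractf)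

lemma smul_pot_left: "smul (pot Q E) B k = Q ** B k - E ** B (k + 1)"
proof -
  have "smul (pot Q E) B k = (\<Sum>j\<in>{0, -1}. pot Q E j ** B (k - j))"
    by (rule smul_eq_sum_superset) (auto simp: pot_def split: if_splits)
  then show ?thesis by (simp add: pot_def matrix_neg_mult)
qed

lemma smul_pot_right: "smul B (pot Q E) k = B k ** Q - B (k + 1) ** E"
proof -
  have "smul B (pot Q E) k = (\<Sum>j\<in>{k, k + 1}. B j ** pot Q E (k - j))"
    by (rule smul_eq_sum_superset) (auto simp: pot_def split: if_splits)
  then show ?thesis by (simp add: pot_def matrix_mult_neg)
qed

lemma smul_commute:
  assumes "\<And>i j. a i ** c j = c j ** a i"
  shows "smul a c = smul c a"
proof
  fix k
  show "smul a c k = smul c a k"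
    unfolding smul_def
    by (rule sum.reindex_bij_witness[where i="\<lambda>j. k - j" and j="\<lambda>j. k - j"]) (auto simp: assms)
qed

lemma smul_assoc:
  assumes a: "vanishes_below N a" and c: "vanishes_below N c" and d: "vanishes_below N d"
  shows "smul (smul a c) d = smul a (smul c d)"
proof
  fix k
  define B where "B = {-(\<bar>k\<bar> + 3 * \<bar>N\<bar>)..\<bar>k\<bar> + 3 * \<bar>N\<bar>}"
  have ac: "vanishes_below (N + N) (smul a c)" and cd: "vanishes_below (N + N) (smul c d)"
    using vanishes_below_smul a c d by blast+
  have below: "j \<ge> L" if "vanishes_below L f" "f j \<noteq> 0" for L j and f :: "'a ser"
    using that by (auto simp: vanishes_below_def not_less[symmetric])
  have inner_left: "smul a c j ** d (k - j) = (\<Sum>i\<in>B. a i ** c (j - i) ** d (k - j))" for j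
  proof (cases "d (k - j) = 0")
    case False
    then have "smul a c j = (\<Sum>i\<in>B. a i ** c (j - i))"
      using below[OF d False] by (intro smul_eq_sum_superset) (auto simp: B_def dest!: below[OF a] below[OF c])
    then show ?thesis by (simp add: matrix_sum_mult)
  qed simp
  have inner_right: "a i ** smul c d (k - i) = (\<Sum>j\<in>B. a i ** (c (j - i) ** d (k - j)))" for i
  proof (cases "a i = 0")
    case False
    have "smul c d (k - i) = (\<Sum>l\<in>(\<lambda>j. j - i) ` B. c l ** d (k - i - l))"
      using below[OF a False]
      by (intro smul_eq_sum_superset) (auto simp: B_def image_iff dest!: below[OF c] below[OF d]
          intro!: bexI[of _ "_ + i"])
    also have "\<dots> = (\<Sum>j\<in>B. c (j - i) ** d (k - j))"
      by (subst sum.reindex) (auto simp: inj_on_def algebra_simps)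
    finally show ?thesis by (simp add: matrix_mult_sum)
  qed simp
  have "smul (smul a c) d k = (\<Sum>j\<in>B. smul a c j ** d (k - j))"
    by (intro smul_eq_sum_superset) (auto simp: B_def dest!: below[OF ac] below[OF d])
  also have "\<dots> = (\<Sum>j\<in>B. \<Sum>i\<in>B. a i ** (c (j - i) ** d (k - j)))"
    by (simp add: inner_left matrix_mul_assoc)
  also have "\<dots> = (\<Sum>i\<in>B. \<Sum>j\<in>B. a i ** (c (j - i) ** d (k - j)))"
    by (rule sum.swap)
  also have "\<dots> = (\<Sum>i\<in>B. a i ** smul c d (k - i))"
    by (simp add: inner_right)
  also have "\<dots> = smul a (smul c d) k"
    by (intro smul_eq_sum_superset[symmetric]) (auto simp: B_def dest!: below[OF a] below[OF cd])
  finally show "smul (smul a c) d k = smul a (smul c d) k" .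
qed

function ser_rinv :: "('n::finite) ser \<Rightarrow> 'n ser" where
  "ser_rinv a k = (if k < 0 then 0 else if k = 0 then mat 1
     else - (\<Sum>j\<in>{1..k}. a j ** ser_rinv a (k - j)))"
  by auto

termination by (relation "Wellfounded.measure (\<lambda>(a, k). nat k)") auto

declare ser_rinv.simps [simp del]

lemma vanishes_below_ser_rinv: "vanishes_below 0 (ser_rinv a)"
  by (simp add: vanishes_below_def ser_rinv.simps)

lemma ser_rinv_0 [simp]: "ser_rinv a 0 = mat 1"
  by (simp add: ser_rinv.simps)

lemma smul_ser_rinv:
  assumes a: "vanishes_below 0 a" "a 0 = mat 1"
  shows "smul a (ser_rinv a) = sone"
proof
  fix k
  show "smul a (ser_rinv a) k = sone k"
  proof (cases "k < 0")
    case True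
    then show ?thesis
      using vanishes_below_smul[OF a(1) vanishes_below_ser_rinv, of a]
      by (simp add: vanishes_below_def sone_def)
  next
    case False
    then have "{0..k} = insert 0 {1..k}" by auto
    then have "smul a (ser_rinv a) k = ser_rinv a k + (\<Sum>j\<in>{1..k}. a j ** ser_rinv a (k - j))"
      using a by (simp add: smul_eq_sum_interval[OF a(1) vanishes_below_ser_rinv])
    also have "\<dots> = sone k"
      using False by (subst (1) ser_rinv.simps) (simp add: sone_def)
    finally show ?thesis .
  qed
qed

lemma ser_rinv_smul:
  assumes a: "vanishes_below 0 a" "a 0 = mat 1"
  shows "smul (ser_rinv a) a = sone"
proof -
  let ?r = "ser_rinv a"
  have r_inv: "smul ?r (ser_rinv ?r) = sone"
    by (intro smul_ser_rinv vanishes_below_ser_rinv ser_rinv_0)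
  have "a = smul a (smul ?r (ser_rinv ?r))"
    by (simp add: r_inv)
  also have "\<dots> = smul (smul a ?r) (ser_rinv ?r)"
    by (simp add: smul_assoc[OF a(1) vanishes_below_ser_rinv vanishes_below_ser_rinv])
  also have "\<dots> = ser_rinv ?r"
    by (simp add: smul_ser_rinv[OF a])
  finally show ?thesis using r_inv by simp
qed

lemma sinv_unique:
  assumes "lbdd a" "lbdd c" "smul a c = sone" "smul c a = sone"
  shows "sinv a = c"
proof -
  have "\<exists>c. lbdd c \<and> smul a c = sone \<and> smul c a = sone" using assms by blast
  then have c': "lbdd (sinv a)" "smul a (sinv a) = sone"
    unfolding sinv_def by (metis (mono_tags, lifting) someI_ex)+
  obtain N where "vanishes_below N a" "vanishes_below N c" "vanishes_below N (sinv a)"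
    using assms(1,2) c'(1) unfolding lbdd_iff_vanishes_below
    by (metis min.cobounded1 min.cobounded2 vanishes_below_mono)
  then have "smul (smul c a) (sinv a) = smul c (smul a (sinv a))"
    by (intro smul_assoc)
  then show ?thesis using assms(4) c'(2) by simp
qed

lemma sinv_eq_ser_rinv:
  assumes "vanishes_below 0 a" "a 0 = mat 1"
  shows "sinv a = ser_rinv a"
  using assms vanishes_below_ser_rinv
  by (intro sinv_unique smul_ser_rinv ser_rinv_smul) (auto simp: lbdd_iff_vanishes_below)

lemma is_diag_mult_commute: "is_diag A \<Longrightarrow> is_diag B \<Longrightarrow> A ** B = B ** A"
  unfolding is_diag_def matrix_matrix_mult_def
  by (auto simp: vec_eq_iff if_distrib cong: if_cong intro!: sum.cong)
    (metis (no_types, lifting) mult.commute mult_eq_0_iff)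

lemma is_diag_mult: "is_diag A \<Longrightarrow> is_diag B \<Longrightarrow> is_diag (A ** B)"
  unfolding is_diag_def matrix_matrix_mult_def
  by (auto intro!: sum.neutral) metis

lemma is_diag_add: "is_diag A \<Longrightarrow> is_diag B \<Longrightarrow> is_diag (A + B)"
  by (simp add: is_diag_def)

lemma is_diag_diff: "is_diag A \<Longrightarrow> is_diag B \<Longrightarrow> is_diag (A - B)"
  by (simp add: is_diag_def)

lemma is_diag_zero: "is_diag 0"
  by (simp add: is_diag_def)

lemma is_diag_mat: "is_diag (mat c)"
  by (simp add: is_diag_def mat_def)

lemma is_diag_sc: "is_diag A \<Longrightarrow> is_diag (sc c A)"
  by (simp add: is_diag_def sc_def)

lemma is_diag_sum: "(\<And>x. x \<in> S \<Longrightarrow> is_diag (f x)) \<Longrightarrow> is_diag (\<Sum>x\<in>S. f x)"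
  by (induction S rule: infinite_finite_induct) (auto simp: is_diag_zero is_diag_add)

lemma is_diag_smul:
  assumes "vanishes_below N a" "vanishes_below M c" "\<And>j. j \<le> k - M \<Longrightarrow> is_diag (a j)"
    "\<And>j. j \<le> k - N \<Longrightarrow> is_diag (c j)"
  shows "is_diag (smul a c k)"
  unfolding smul_eq_sum_interval[OF assms(1,2)] using assms(3,4)
  by (intro is_diag_sum is_diag_mult) auto

lemma diag_commutator_nth:
  assumes "is_diag E"
  shows "(E ** M - M ** E) $ c $ d = (E $ c $ c - E $ d $ d) * M $ c $ d"
proof -
  have "(E ** M) $ c $ d = (\<Sum>k\<in>UNIV. if k = c then E $ c $ c * M $ c $ d else 0)"
    unfolding matrix_matrix_mult_def vec_lambda_beta
    by (rule sum.cong) (use assms in \<open>auto simp: is_diag_def\<close>)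
  moreover have "(M ** E) $ c $ d = (\<Sum>k\<in>UNIV. if k = d then M $ c $ d * E $ d $ d else 0)"
    unfolding matrix_matrix_mult_def vec_lambda_beta
    by (rule sum.cong) (use assms in \<open>auto simp: is_diag_def\<close>)
  ultimately show ?thesis by (simp add: algebra_simps)
qed

text \<open>In operator form: if S and T = S D transform d + P into d + L1 and d + L2, i.e.
  S L1 = dS + P S and T L2 = dT + P T, then D transforms d + L1 into d + L2.\<close>

lemma gauge_factor_equation:
  assumes bounds: "vanishes_below (-1) S" "vanishes_below (-1) Si" "vanishes_below (-1) D"
      "vanishes_below (-1) dS" "vanishes_below (-1) dD" "vanishes_below (-1) P"
      "vanishes_below (-1) L1" "vanishes_below (-1) L2"
    and Si: "smul Si S = sone"
    and eqS: "smul S L1 = (\<lambda>k. dS k + smul P S k)"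
    and eqT: "smul (smul S D) L2 = (\<lambda>k. dT k + smul P (smul S D) k)"
    and dT: "dT = (\<lambda>k. smul dS D k + smul S dD k)"
  shows "(\<lambda>k. dD k + smul L1 D k - smul D L2 k) = (\<lambda>_. 0)"
proof -
  have b2: "vanishes_below (-2) x" if "vanishes_below (-1) x" for x :: "'a ser"
    using that by (rule vanishes_below_mono) simp
  have L1D: "vanishes_below (-2) (smul L1 D)" and DL2: "vanishes_below (-2) (smul D L2)"
    and PS: "vanishes_below (-2) (smul P S)"
    using vanishes_below_smul bounds by fastforce+
  define Y where "Y = (\<lambda>k. dD k + smul L1 D k - smul D L2 k)"
  have Y: "vanishes_below (-2) Y"
    unfolding Y_def by (intro vanishes_below_diff vanishes_below_add b2 bounds L1D DL2)
  have "smul S Y m = 0" for m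
  proof -
    have "smul S Y m = smul S (\<lambda>k. dD k + smul L1 D k) m - smul S (smul D L2) m"
      unfolding Y_def using bounds L1D DL2
      by (intro smul_diff_right[of "-1" _ "-2"]) (simp_all add: vanishes_below_add b2)
    also have "smul S (\<lambda>k. dD k + smul L1 D k) m = smul S dD m + smul S (smul L1 D) m"
      using bounds L1D by (intro smul_add_right[of "-1" _ "-2"]) (simp_all add: b2)
    also have "smul S (smul L1 D) = smul (smul S L1) D"
      using bounds by (simp add: smul_assoc)
    also have "\<dots> m = smul dS D m + smul (smul P S) D m"
      unfolding eqS using bounds PS by (intro smul_add_left[of "-2"]) (simp_all add: b2)
    also have "smul (smul P S) D = smul P (smul S D)"
      using bounds by (simp add: smul_assoc)
    also have "smul S (smul D L2) = smul (smul S D) L2"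
      using bounds by (simp add: smul_assoc)
    finally show ?thesis by (simp add: eqT dT)
  qed
  then have "smul S Y = (\<lambda>_. 0)" by (simp add: fun_eq_iff)
  then have "smul Si (smul S Y) = (\<lambda>_. 0)" by simp
  moreover have "smul Si (smul S Y) = Y"
    using bounds Y by (simp add: smul_assoc[of "-2", symmetric] b2 Si)
  ultimately show ?thesis by (simp add: Y_def)
qed

lemma pot_0_apply: "pot 0 E l = (if l = -1 then - E else 0)"
  by (simp add: pot_def)

lemma gauge_equation_commutator:
  assumes D: "vanishes_below 0 D" and h: "vanishes_below 0 h1" "vanishes_below 0 h2"
    and gauge: "(\<lambda>k. dD k + smul (\<lambda>l. pot 0 E l + h1 l) D k - smul D (\<lambda>l. pot 0 E l + h2 l) k) = (\<lambda>_. 0)"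
  shows "E ** D (m + 1) - D (m + 1) ** E = dD m + smul h1 D m - smul D h2 m"
proof -
  have h': "vanishes_below (-1) h1" "vanishes_below (-1) h2"
    using h vanishes_below_mono by fastforce+
  have "smul (\<lambda>l. pot 0 E l + h1 l) D m = - (E ** D (m + 1)) + smul h1 D m"
    using smul_add_left[OF vanishes_below_pot h'(1) D] by (simp add: smul_pot_left matrix_neg_mult)
  moreover have "smul D (\<lambda>l. pot 0 E l + h2 l) m = - (D (m + 1) ** E) + smul D h2 m"
    using smul_add_right[OF D vanishes_below_pot h'(2)] by (simp add: smul_pot_right matrix_mult_neg)
  ultimately have "dD m + (- (E ** D (m + 1)) + smul h1 D m) - (- (D (m + 1) ** E) + smul D h2 m) = 0"
    using fun_cong[OF gauge, of m] by simp
  then show ?thesis by (simp add: algebra_simps)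
qed

lemma dressing_factor_commutator:
  assumes S: "vanishes_below 0 S" "S 0 = mat 1" and D: "vanishes_below 0 D"
    and dS: "vanishes_below 0 dS" and dD: "vanishes_below 0 dD"
    and h: "vanishes_below 0 h1" "vanishes_below 0 h2"
    and eqS: "\<And>k. dS k + smul (pot Q E) S k = smul S (\<lambda>l. pot 0 E l + h1 l) k"
    and eqT: "\<And>k. dT k + smul (pot Q E) (smul S D) k = smul (smul S D) (\<lambda>l. pot 0 E l + h2 l) k"
    and dT: "\<And>k. dT k = smul dS D k + smul S dD k"
  shows "E ** D (m + 1) - D (m + 1) ** E = dD m + smul h1 D m - smul D h2 m"
proof (rule gauge_equation_commutator[OF D h])
  have below: "vanishes_below (-1) f" if "vanishes_below 0 f" for f :: "'a ser"
    using that by (rule vanishes_below_mono) simp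
  show "(\<lambda>k. dD k + smul (\<lambda>l. pot 0 E l + h1 l) D k - smul D (\<lambda>l. pot 0 E l + h2 l) k) = (\<lambda>_. 0)"
  proof (rule gauge_factor_equation[where S=S and Si="ser_rinv S" and dS=dS and P="pot Q E" and dT=dT])
    show "vanishes_below (-1) (\<lambda>l. pot 0 E l + h1 l)" "vanishes_below (-1) (\<lambda>l. pot 0 E l + h2 l)"
      using h by (auto intro: vanishes_below_add vanishes_below_pot below)
    show "smul S (\<lambda>l. pot 0 E l + h1 l) = (\<lambda>k. dS k + smul (pot Q E) S k)"
      using eqS by (simp add: fun_eq_iff)
    show "smul (smul S D) (\<lambda>l. pot 0 E l + h2 l) = (\<lambda>k. dT k + smul (pot Q E) (smul S D) k)"
      using eqT by (simp add: fun_eq_iff)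
  qed (use S D dS dD dT in \<open>auto intro: below ser_rinv_smul vanishes_below_ser_rinv vanishes_below_pot\<close>)
qed

lemma sinv_smul:
  assumes S: "vanishes_below 0 S" "S 0 = mat 1" and D: "vanishes_below 0 D" "D 0 = mat 1"
  shows "sinv (smul S D) = smul (sinv D) (sinv S)"
proof (rule sinv_unique)
  let ?Si = "ser_rinv S" and ?Di = "ser_rinv D"
  note bounds = S(1) D(1) vanishes_below_ser_rinv[of S] vanishes_below_ser_rinv[of D]
  have SD: "vanishes_below 0 (smul S D)" and DS: "vanishes_below 0 (smul ?Di ?Si)"
    using vanishes_below_smul bounds by fastforce+
  then show "lbdd (smul S D)" "lbdd (smul (sinv D) (sinv S))"
    by (auto simp: lbdd_iff_vanishes_below sinv_eq_ser_rinv S D)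
  have "smul (smul S D) (smul ?Di ?Si) = smul S (smul (smul D ?Di) ?Si)"
    using bounds DS by (simp add: smul_assoc)
  then show "smul (smul S D) (smul (sinv D) (sinv S)) = sone"
    by (simp add: sinv_eq_ser_rinv S D smul_ser_rinv)
  have "smul (smul ?Di ?Si) (smul S D) = smul ?Di (smul (smul ?Si S) D)"
    using bounds SD by (simp add: smul_assoc)
  then show "smul (smul (sinv D) (sinv S)) (smul S D) = sone"
    by (simp add: sinv_eq_ser_rinv S D ser_rinv_smul)
qed

lemma conj_smul_diag_factor:
  assumes S: "vanishes_below 0 S" "S 0 = mat 1"
    and D: "vanishes_below 0 D" "D 0 = mat 1" "\<And>k. is_diag (D k)" and b: "diag_poly_inv b"
  shows "smul (smul (smul S D) b) (sinv (smul S D)) = smul (smul S b) (sinv S)"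
proof -
  obtain N where "vanishes_below N b" "N \<le> 0"
    using b unfolding diag_poly_inv_def lbdd_iff_vanishes_below by (meson linear vanishes_below_mono)
  moreover note S(1) D(1) vanishes_below_ser_rinv[of S] vanishes_below_ser_rinv[of D]
  ultimately have bounds: "vanishes_below N b" "vanishes_below N S" "vanishes_below N D"
    "vanishes_below N (ser_rinv S)" "vanishes_below N (ser_rinv D)"
    using vanishes_below_mono by blast+
  have low: "vanishes_below (N + N) x" if "vanishes_below N x" for x :: "'a ser"
    using that \<open>N \<le> 0\<close> by (simp add: vanishes_below_mono)
  have "smul D b = smul b D"
    using D(3) b by (intro smul_commute is_diag_mult_commute) (auto simp: diag_poly_inv_def)
  then have "smul (smul S D) b = smul (smul S b) D"
    using bounds by (simp add: smul_assoc)
  moreover have "smul (smul (smul S b) D) (smul (ser_rinv D) (ser_rinv S))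
      = smul (smul S b) (smul D (smul (ser_rinv D) (ser_rinv S)))"
    using bounds vanishes_below_smul low by (intro smul_assoc) blast+
  moreover have "smul D (smul (ser_rinv D) (ser_rinv S)) = ser_rinv S"
    using bounds by (simp add: smul_assoc[symmetric] smul_ser_rinv D)
  ultimately show ?thesis
    by (simp add: sinv_smul S D sinv_eq_ser_rinv)
qed

lemma sc_zero [simp]: "sc c 0 = 0"
  by (simp add: sc_def vec_eq_iff)

lemma sc_add: "sc c (A + B) = sc c A + sc c B"
  by (simp add: sc_def vec_eq_iff algebra_simps)

lemma sc_diff: "sc c (A - B) = sc c A - sc c B"
  by (simp add: sc_def vec_eq_iff algebra_simps)

lemma sc_minus: "sc c (- A) = - sc c A"
  by (simp add: sc_def vec_eq_iff)

lemma sc_sum: "sc c (\<Sum>x\<in>A. F x) = (\<Sum>x\<in>A. sc c (F x))"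
  by (induction A rule: infinite_finite_induct) (auto simp: sc_add)

lemma sc_mult_left: "sc c A ** B = sc c (A ** B)"
  by (simp add: sc_def vec_eq_iff matrix_matrix_mult_def sum_distrib_left mult.assoc)

lemma sc_mult_right: "A ** sc c B = sc c (A ** B)"
  by (simp add: sc_def vec_eq_iff matrix_matrix_mult_def sum_distrib_left mult.left_commute)

lemma smul_sum_sc_right:
  assumes "vanishes_below N T" "\<And>i. vanishes_below M (H i)"
  shows "smul T (\<lambda>l. \<Sum>i\<in>I. sc (c i) (H i l)) k = (\<Sum>i\<in>I. sc (c i) (smul T (H i) k))"
proof -
  have "vanishes_below M (\<lambda>l. \<Sum>i\<in>I. sc (c i) (H i l))"
    using assms(2) by (simp add: vanishes_below_def)
  then have "smul T (\<lambda>l. \<Sum>i\<in>I. sc (c i) (H i l)) k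
      = (\<Sum>j\<in>{N..k-M}. \<Sum>i\<in>I. sc (c i) (T j ** H i (k - j)))"
    by (simp add: smul_eq_sum_interval[OF assms(1)] matrix_mult_sum sc_mult_right)
  also have "\<dots> = (\<Sum>i\<in>I. sc (c i) (smul T (H i) k))"
    by (subst sum.swap) (simp add: smul_eq_sum_interval[OF assms] sc_sum)
  finally show ?thesis .
qed

section \<open>Holomorphic coefficients and partial derivatives\<close>

lemma holo_n_const: "open S \<Longrightarrow> holo_n (\<lambda>_. c) S"
  by (simp add: holo_n_def)

lemma holo_n_add: "holo_n f S \<Longrightarrow> holo_n g S \<Longrightarrow> holo_n (\<lambda>p. f p + g p) S"
  unfolding holo_n_def by (auto intro!: continuous_on_add field_differentiable_add)

lemma holo_n_mult: "holo_n f S \<Longrightarrow> holo_n g S \<Longrightarrow> holo_n (\<lambda>p. f p * g p) S"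
  unfolding holo_n_def by (auto intro!: continuous_on_mult field_differentiable_mult)

lemma holo_n_sum: "open S \<Longrightarrow> (\<And>x. x \<in> A \<Longrightarrow> holo_n (f x) S) \<Longrightarrow> holo_n (\<lambda>p. \<Sum>x\<in>A. f x p) S"
  by (induction A rule: infinite_finite_induct) (auto simp: holo_n_const holo_n_add)

lemma holo_n_cong:
  assumes "holo_n f S" "\<And>p. p \<in> S \<Longrightarrow> f p = g p"
  shows "holo_n g S"
  unfolding holo_n_def
proof (intro conjI ballI allI)
  show "open S" using assms(1) by (simp add: holo_n_def)
  then have "open {z. upd p i z \<in> S}" for p i by (rule open_line_preimage)
  show "continuous_on S g" using assms by (auto simp: holo_n_def cong: continuous_on_cong)
  fix p i assume "p \<in> S"
  then obtain D where "((\<lambda>z. f (upd p i z)) has_field_derivative D) (at (p $ i))"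
    using assms(1) by (auto simp: holo_n_def field_differentiable_def)
  then have "((\<lambda>z. g (upd p i z)) has_field_derivative D) (at (p $ i))"
    by (rule has_field_derivative_transform_within_open[where S="{z. upd p i z \<in> S}"])
      (use \<open>open {z. upd p i z \<in> S}\<close> \<open>p \<in> S\<close> assms(2) in auto)
  then show "(\<lambda>z. g (upd p i z)) field_differentiable at (p $ i)"
    by (auto simp: field_differentiable_def)
qed

lemma holo_mat_open: "holo_mat f S \<Longrightarrow> open S"
  by (auto simp: holo_mat_def holo_n_def)

lemma holo_mat_const: "open S \<Longrightarrow> holo_mat (\<lambda>_. c) S"
  by (simp add: holo_mat_def holo_n_const)

lemma holo_mat_minus: "holo_mat f S \<Longrightarrow> holo_mat (\<lambda>p. - f p) S"
  unfolding holo_mat_def holo_n_def by (auto intro!: continuous_on_minus field_differentiable_minus)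

lemma holo_mat_sum: "open S \<Longrightarrow> (\<And>x. x \<in> A \<Longrightarrow> holo_mat (f x) S) \<Longrightarrow> holo_mat (\<lambda>p. \<Sum>x\<in>A. f x p) S"
  unfolding holo_mat_def by (auto intro!: holo_n_sum)

lemma holo_mat_mult: "holo_mat f S \<Longrightarrow> holo_mat g S \<Longrightarrow> holo_mat (\<lambda>p. f p ** g p) S"
  using holo_mat_open unfolding holo_mat_def matrix_matrix_mult_def
  by (auto intro!: holo_n_sum holo_n_mult)

lemma holo_mat_cong: "holo_mat f S \<Longrightarrow> (\<And>p. p \<in> S \<Longrightarrow> f p = g p) \<Longrightarrow> holo_mat g S"
  unfolding holo_mat_def by (auto intro: holo_n_cong[of "\<lambda>p. f p $ _ $ _"])

lemma holo_mat_smul: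
  assumes A: "\<And>k. holo_mat (A k) S" "\<And>p. p \<in> S \<Longrightarrow> vanishes_below N (\<lambda>k. A k p)"
    and B: "\<And>k. holo_mat (B k) S" "\<And>p. p \<in> S \<Longrightarrow> vanishes_below M (\<lambda>k. B k p)"
  shows "holo_mat (\<lambda>p. smul (\<lambda>k. A k p) (\<lambda>k. B k p) m) S"
proof (rule holo_mat_cong)
  show "holo_mat (\<lambda>p. \<Sum>j\<in>{N..m-M}. A j p ** B (m - j) p) S"
    using holo_mat_open[OF A(1)] by (intro holo_mat_sum holo_mat_mult A B)
qed (simp add: smul_eq_sum_interval[OF A(2) B(2)])

lemma holo_mat_ser_rinv:
  assumes "\<And>k. holo_mat (A k) S"
  shows "holo_mat (\<lambda>p. ser_rinv (\<lambda>k. A k p) n) S"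
proof (induction "nat n" arbitrary: n rule: less_induct)
  case less
  have S: "open S" using holo_mat_open assms by blast
  show ?case
  proof (cases "n \<le> 0")
    case True
    then show ?thesis
      by (intro holo_mat_cong[OF holo_mat_const[OF S, of "if n < 0 then 0 else mat 1"]])
        (simp add: ser_rinv.simps[of _ n])
  next
    case False
    have "holo_mat (\<lambda>p. - (\<Sum>j\<in>{1..n}. A j p ** ser_rinv (\<lambda>k. A k p) (n - j))) S"
      using False by (intro holo_mat_minus holo_mat_sum[OF S] holo_mat_mult assms less) auto
    then show ?thesis
      by (rule holo_mat_cong) (use False in \<open>simp add: ser_rinv.simps[of _ n]\<close>)
  qed
qed

lemma holo_n_line_derivative:
  "holo_n f X \<Longrightarrow> x \<in> X \<Longrightarrow> ((\<lambda>z. f (upd x i z)) has_field_derivative pd_sc f i x) (at (x $ i))"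
  by (simp add: holo_n_def pd_sc_def DERIV_deriv_iff_field_differentiable)

lemma holo_n_compose_line_derivative:
  assumes G: "holo_n G U" and u: "\<forall>j. holo_n (\<lambda>x. u x $ j) X" and x: "x \<in> X" "u x \<in> U"
  shows "((\<lambda>z. G (u (upd x \<alpha> z))) has_field_derivative
    (\<Sum>j\<in>UNIV. pd_sc G j (u x) * pd_sc (\<lambda>y. u y $ j) \<alpha> x)) (at (x $ \<alpha>))"
  using holo_n_chain_rule[OF G, of "\<lambda>z. u (upd x \<alpha> z)" "\<lambda>j. pd_sc (\<lambda>y. u y $ j) \<alpha> x" "x $ \<alpha>"]
    holo_n_line_derivative[OF spec[OF u] x(1)] x(2)
  by simp

lemma holo_n_compose:
  assumes G: "holo_n G U" and u: "\<forall>j. holo_n (\<lambda>x. u x $ j) X" and uX: "u ` X \<subseteq> U"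
  shows "holo_n (\<lambda>x. G (u x)) X"
  unfolding holo_n_def
proof (intro conjI ballI allI)
  show "open X" using u by (auto simp: holo_n_def)
  have "continuous_on X (\<lambda>x. \<chi> j. u x $ j)"
    using u by (intro continuous_on_vec_lambda) (simp add: holo_n_def)
  then have "continuous_on X u" by simp
  moreover have "continuous_on U G" using G by (simp add: holo_n_def)
  ultimately show "continuous_on X (\<lambda>x. G (u x))"
    using uX by (metis continuous_on_compose2)
  show "(\<lambda>z. G (u (upd x \<alpha> z))) field_differentiable at (x $ \<alpha>)" if "x \<in> X" for x \<alpha>
    using holo_n_compose_line_derivative[OF G u that] uX that
    unfolding field_differentiable_def by blast
qed

lemma holo_mat_compose:
  "holo_mat G U \<Longrightarrow> \<forall>j. holo_n (\<lambda>x. u x $ j) X \<Longrightarrow> u ` X \<subseteq> U \<Longrightarrow> holo_mat (\<lambda>x. G (u x)) X"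
  unfolding holo_mat_def using holo_n_compose[of "\<lambda>p. G p $ _ $ _" U u X] by blast

definition has_partial :: "(complex^'n \<Rightarrow> ('n::finite) cmat) \<Rightarrow> 'n \<Rightarrow> complex^'n \<Rightarrow> 'n cmat \<Rightarrow> bool" where
  "has_partial f i x M \<longleftrightarrow>
     (\<forall>a c. ((\<lambda>z. f (upd x i z) $ a $ c) has_field_derivative M $ a $ c) (at (x $ i)))"

lemma has_partial_imp_pd: "has_partial f i x M \<Longrightarrow> pd f i x = M"
  by (simp add: has_partial_def pd_def pd_sc_def vec_eq_iff DERIV_imp_deriv)

lemma holo_mat_has_partial: "holo_mat f S \<Longrightarrow> p \<in> S \<Longrightarrow> has_partial f i p (pd f i p)"
  using holo_n_line_derivative by (fastforce simp: has_partial_def holo_mat_def pd_def)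

lemma has_partial_const: "has_partial (\<lambda>_. c) i x 0"
  by (simp add: has_partial_def)

lemma has_partial_add:
  "has_partial f i x M \<Longrightarrow> has_partial g i x N \<Longrightarrow> has_partial (\<lambda>y. f y + g y) i x (M + N)"
  unfolding has_partial_def by (auto intro!: DERIV_add)

lemma has_partial_sum:
  "(\<And>k. k \<in> A \<Longrightarrow> has_partial (f k) i x (M k)) \<Longrightarrow>
    has_partial (\<lambda>y. \<Sum>k\<in>A. f k y) i x (\<Sum>k\<in>A. M k)"
  by (induction A rule: infinite_finite_induct) (auto simp: has_partial_const has_partial_add)

lemma has_partial_mult:
  assumes "has_partial f i x M" "has_partial g i x N"
  shows "has_partial (\<lambda>y. f y ** g y) i x (M ** g x + f x ** N)"
  unfolding has_partial_def
proof (intro allI)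
  fix a c
  have "((\<lambda>z. \<Sum>k\<in>UNIV. f (upd x i z) $ a $ k * g (upd x i z) $ k $ c) has_field_derivative
      (\<Sum>k\<in>UNIV. f (upd x i (x $ i)) $ a $ k * N $ k $ c + M $ a $ k * g (upd x i (x $ i)) $ k $ c))
      (at (x $ i))"
    using assms unfolding has_partial_def by (intro DERIV_sum DERIV_mult') auto
  then show "((\<lambda>z. (f (upd x i z) ** g (upd x i z)) $ a $ c) has_field_derivative
      (M ** g x + f x ** N) $ a $ c) (at (x $ i))"
    by (simp add: matrix_matrix_mult_def sum.distrib algebra_simps)
qed

lemma has_partial_cong:
  assumes "open X" "x \<in> X" "\<And>y. y \<in> X \<Longrightarrow> f y = g y" "has_partial f i x M"
  shows "has_partial g i x M"
  unfolding has_partial_def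
proof (intro allI)
  fix a c
  show "((\<lambda>z. g (upd x i z) $ a $ c) has_field_derivative M $ a $ c) (at (x $ i))"
    by (rule has_field_derivative_transform_within_open[where S="{z. upd x i z \<in> X}"
          and f="\<lambda>z. f (upd x i z) $ a $ c"])
      (use assms open_line_preimage[OF assms(1)] in \<open>auto simp: has_partial_def\<close>)
qed

lemma pd_eq_0:
  assumes "open X" "x \<in> X" "\<And>y. y \<in> X \<Longrightarrow> f y = 0"
  shows "pd f i x = 0"
proof -
  have "has_partial f i x 0"
    by (rule has_partial_cong[OF assms(1,2) _ has_partial_const]) (simp add: assms(3))
  then show ?thesis by (rule has_partial_imp_pd)
qed

lemma has_partial_compose:
  assumes G: "holo_mat G U" and u: "\<forall>j. holo_n (\<lambda>y. u y $ j) X" and x: "x \<in> X" "u x \<in> U"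
  shows "has_partial (\<lambda>y. G (u y)) \<alpha> x (\<Sum>j\<in>UNIV. sc (jac u j \<alpha> x) (pd G j (u x)))"
  unfolding has_partial_def
proof (intro allI)
  fix a c
  have "holo_n (\<lambda>p. G p $ a $ c) U" using G by (simp add: holo_mat_def)
  from holo_n_compose_line_derivative[OF this u x]
  show "((\<lambda>z. G (u (upd x \<alpha> z)) $ a $ c) has_field_derivative
      (\<Sum>j\<in>UNIV. sc (jac u j \<alpha> x) (pd G j (u x))) $ a $ c) (at (x $ \<alpha>))"
    by (simp add: pd_def sc_def jac_def mult.commute)
qed

lemma pd_compose:
  "holo_mat G U \<Longrightarrow> \<forall>j. holo_n (\<lambda>y. u y $ j) X \<Longrightarrow> x \<in> X \<Longrightarrow> u x \<in> U \<Longrightarrow>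
    pd (\<lambda>y. G (u y)) \<alpha> x = (\<Sum>j\<in>UNIV. sc (jac u j \<alpha> x) (pd G j (u x)))"
  by (rule has_partial_imp_pd[OF has_partial_compose])

lemma pd_diag:
  assumes f: "holo_mat f X" and diag: "\<And>y. y \<in> X \<Longrightarrow> is_diag (f y)" and x: "x \<in> X"
  shows "is_diag (pd f i x)"
  unfolding is_diag_def
proof (intro allI impI)
  fix c d :: 'a assume "c \<noteq> d"
  have "((\<lambda>z. f (upd x i z) $ c $ d) has_field_derivative pd f i x $ c $ d) (at (x $ i))"
    using holo_mat_has_partial[OF f x] by (simp add: has_partial_def)
  moreover have "((\<lambda>z. f (upd x i z) $ c $ d) has_field_derivative 0) (at (x $ i))"
    by (rule has_field_derivative_transform_within_open[of "\<lambda>z. 0" _ _ "{z. upd x i z \<in> X}"])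
      (use open_line_preimage holo_mat_open[OF f] x diag \<open>c \<noteq> d\<close> in \<open>auto simp: is_diag_def\<close>)
  ultimately show "pd f i x $ c $ d = 0"
    by (rule DERIV_unique)
qed

lemma has_partial_smul:
  assumes A: "\<And>k. holo_mat (A k) S" "\<And>p. p \<in> S \<Longrightarrow> vanishes_below N (\<lambda>k. A k p)"
    and B: "\<And>k. holo_mat (B k) S" "\<And>p. p \<in> S \<Longrightarrow> vanishes_below M (\<lambda>k. B k p)"
    and p: "p \<in> S"
  shows "has_partial (\<lambda>p. smul (\<lambda>k. A k p) (\<lambda>k. B k p) m) i p
    (smul (\<lambda>k. pd (A k) i p) (\<lambda>k. B k p) m + smul (\<lambda>k. A k p) (\<lambda>k. pd (B k) i p) m)"
proof -
  have S: "open S" using holo_mat_open[OF A(1)] .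
  have dA: "vanishes_below N (\<lambda>k. pd (A k) i p)" and dB: "vanishes_below M (\<lambda>k. pd (B k) i p)"
    using A(2) B(2) by (auto simp: vanishes_below_def intro!: pd_eq_0[OF S p])
  have "has_partial (\<lambda>p. \<Sum>j\<in>{N..m-M}. A j p ** B (m - j) p) i p
      (\<Sum>j\<in>{N..m-M}. pd (A j) i p ** B (m - j) p + A j p ** pd (B (m - j)) i p)"
    by (intro has_partial_sum has_partial_mult holo_mat_has_partial[OF A(1) p] holo_mat_has_partial[OF B(1) p])
  then have "has_partial (\<lambda>p. smul (\<lambda>k. A k p) (\<lambda>k. B k p) m) i p
      (\<Sum>j\<in>{N..m-M}. pd (A j) i p ** B (m - j) p + A j p ** pd (B (m - j)) i p)"
    by (rule has_partial_cong[OF S p, rotated]) (simp only: smul_eq_sum_interval[OF A(2) B(2)])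
  then show ?thesis
    by (simp only: smul_eq_sum_interval[OF dA B(2)[OF p]] smul_eq_sum_interval[OF A(2)[OF p] dB]
        sum.distrib)
qed

section \<open>Dressing transformations\<close>

text \<open>On potentials, L_alpha = sum_i (du^i/dx^alpha) L_i.\<close>

definition pullback ::
  "(complex^'n \<Rightarrow> complex^'n) \<Rightarrow> ('n \<Rightarrow> complex^'n \<Rightarrow> ('n::finite) cmat) \<Rightarrow> 'n \<Rightarrow> complex^'n \<Rightarrow> 'n cmat"
  where "pullback u F \<alpha> x = (\<Sum>i\<in>UNIV. sc (jac u i \<alpha> x) (F i (u x)))"

lemma Ax_eq_pullback: "Ax u = pullback u (\<lambda>i p. munit i)"
proof (intro ext)
  fix \<alpha> x
  have "(\<Sum>i\<in>UNIV. jac u i \<alpha> x * (if a = i \<and> c = i then 1 else 0))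
      = (\<Sum>i\<in>UNIV. if i = a then (if a = c then jac u a \<alpha> x else 0) else 0)" for a c
    by (rule sum.cong) auto
  then show "Ax u \<alpha> x = pullback u (\<lambda>i p. munit i) \<alpha> x"
    by (simp add: Ax_def pullback_def vec_eq_iff munit_def sc_def)
qed

lemma dressing_equation_lincomb:
  assumes T: "vanishes_below 0 T" and h: "\<And>i. vanishes_below 0 (h i)"
    and eq: "\<And>i. dT i + smul (pot (Q i) (E i)) T k = smul T (\<lambda>l. pot 0 (E i) l + h i l) k"
  shows "(\<Sum>i\<in>UNIV. sc (c i) (dT i))
      + smul (pot (\<Sum>i\<in>UNIV. sc (c i) (Q i)) (\<Sum>i\<in>UNIV. sc (c i) (E i))) T k
    = smul T (\<lambda>l. pot 0 (\<Sum>i\<in>UNIV. sc (c i) (E i)) l + (\<Sum>i\<in>UNIV. sc (c i) (h i l))) k"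
proof -
  have expand: "smul T (\<lambda>l. pot 0 F l + H l) k = - (T (k + 1) ** F) + smul T H k"
    if "vanishes_below 0 H" for F H
    using smul_add_right[OF T vanishes_below_pot vanishes_below_mono[OF that]]
    by (simp add: smul_pot_right matrix_mult_neg)
  have vh: "vanishes_below 0 (\<lambda>l. \<Sum>i\<in>UNIV. sc (c i) (h i l))"
    using h by (simp add: vanishes_below_def)
  have dT: "dT i = - (T (k + 1) ** E i) + smul T (h i) k - (Q i ** T k - E i ** T (k + 1))" for i
    using eq[of i] unfolding expand[OF h] smul_pot_left by (simp add: algebra_simps)
  show ?thesis
    unfolding expand[OF vh] smul_pot_left smul_sum_sc_right[OF T h] dT
    by (simp add: sc_add sc_diff sc_minus sum.distrib sum_subtractf sum_negf matrix_sum_mult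
        matrix_mult_sum sc_mult_left sc_mult_right)
qed

lemma dressingE:
  assumes "dressing S Q E T"
  obtains h where "\<And>p. p \<in> S \<Longrightarrow> T 0 p = mat 1" "\<And>p. p \<in> S \<Longrightarrow> vanishes_below 0 (\<lambda>k. T k p)"
    "\<And>k. holo_mat (T k) S" "\<And>j k p. is_diag (h j k p)" "\<And>j p. vanishes_below 0 (\<lambda>k. h j k p)"
    "\<And>j p k. p \<in> S \<Longrightarrow> pd (T k) j p + smul (pot (Q j p) (E j p)) (\<lambda>l. T l p) k
       = smul (\<lambda>l. T l p) (\<lambda>l. pot 0 (E j p) l + h j l p) k"
proof -
  obtain h where "\<forall>p\<in>S. T 0 p = mat 1" "\<forall>k<0. \<forall>p\<in>S. T k p = 0" "\<forall>k. holo_mat (T k) S"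
    "\<forall>j k p. is_diag (h j k p)" "\<forall>j. \<forall>k<0. \<forall>p. h j k p = 0"
    "\<forall>j. \<forall>p\<in>S. \<forall>k. pd (T k) j p + smul (pot (Q j p) (E j p)) (\<lambda>l. T l p) k
       = smul (\<lambda>l. T l p) (\<lambda>l. (if l = -1 then - E j p else 0) + h j l p) k"
    using assms unfolding dressing_def by blast
  then show thesis
    by (intro that[of h]) (auto simp: vanishes_below_def pot_0_apply)
qed

lemma dressing_pullback:
  assumes dU: "dressing U Q E T" and u: "\<forall>j. holo_n (\<lambda>x. u x $ j) X" and uX: "u ` X \<subseteq> U"
  shows "dressing X (pullback u Q) (pullback u E) (\<lambda>k x. T k (u x))"
proof -
  obtain h where T0: "\<And>p. p \<in> U \<Longrightarrow> T 0 p = mat 1"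
    and T_below: "\<And>p. p \<in> U \<Longrightarrow> vanishes_below 0 (\<lambda>k. T k p)" and T_holo: "\<And>k. holo_mat (T k) U"
    and h_diag: "\<And>j k p. is_diag (h j k p)" and h_below: "\<And>j p. vanishes_below 0 (\<lambda>k. h j k p)"
    and eq: "\<And>j p k. p \<in> U \<Longrightarrow> pd (T k) j p + smul (pot (Q j p) (E j p)) (\<lambda>l. T l p) k
       = smul (\<lambda>l. T l p) (\<lambda>l. pot 0 (E j p) l + h j l p) k"
    using dU by (rule dressingE) blast
  have "pd (\<lambda>x. T k (u x)) \<alpha> x + smul (pot (pullback u Q \<alpha> x) (pullback u E \<alpha> x)) (\<lambda>l. T l (u x)) k
      = smul (\<lambda>l. T l (u x)) (\<lambda>l. pot 0 (pullback u E \<alpha> x) l + pullback u (\<lambda>i. h i l) \<alpha> x) k"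
    if x: "x \<in> X" for x \<alpha> k
  proof -
    have ux: "u x \<in> U" using uX x by blast
    show ?thesis
      unfolding pd_compose[OF T_holo u x ux] pullback_def
      by (intro dressing_equation_lincomb T_below h_below eq ux)
  qed
  moreover have "vanishes_below 0 (\<lambda>k. pullback u (\<lambda>i. h i k) \<alpha> x)" for \<alpha> x
    using h_below by (simp add: vanishes_below_def pullback_def)
  moreover have "is_diag (pullback u (\<lambda>i. h i k) \<alpha> x)" for \<alpha> k x
    unfolding pullback_def by (intro is_diag_sum is_diag_sc h_diag)
  ultimately show ?thesis
    unfolding dressing_def
    using uX T0 T_below holo_mat_compose[OF T_holo u uX]
    by (intro conjI exI[of _ "\<lambda>\<alpha> k x. pullback u (\<lambda>i. h i k) \<alpha> x"])
      (auto simp: vanishes_below_def pot_0_apply)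
qed

text \<open>Induction on the order: the right-hand side of the commutator equation only involves
  lower coefficients of D, so it is diagonal, which forces (E_cc - E_dd) D_cd = 0.\<close>

lemma gauge_commutator_imp_diag:
  fixes D :: "int \<Rightarrow> complex^'n \<Rightarrow> ('n::finite) cmat"
  assumes D: "\<And>k. holo_mat (D k) X" "\<And>y. y \<in> X \<Longrightarrow> vanishes_below 0 (\<lambda>k. D k y)"
      "\<And>y. y \<in> X \<Longrightarrow> is_diag (D 0 y)"
    and h: "\<And>\<alpha> k y. is_diag (h1 \<alpha> k y)" "\<And>\<alpha> k y. is_diag (h2 \<alpha> k y)"
      "\<And>\<alpha> y. vanishes_below 0 (\<lambda>k. h1 \<alpha> k y)" "\<And>\<alpha> y. vanishes_below 0 (\<lambda>k. h2 \<alpha> k y)"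
    and E: "\<And>\<alpha> y. is_diag (E \<alpha> y)"
    and sep: "\<And>y c d. y \<in> X \<Longrightarrow> c \<noteq> d \<Longrightarrow> \<exists>\<alpha>. E \<alpha> y $ c $ c \<noteq> E \<alpha> y $ d $ d"
    and eq: "\<And>\<alpha> y m. y \<in> X \<Longrightarrow> E \<alpha> y ** D (m + 1) y - D (m + 1) y ** E \<alpha> y
      = pd (D m) \<alpha> y + smul (\<lambda>k. h1 \<alpha> k y) (\<lambda>k. D k y) m - smul (\<lambda>k. D k y) (\<lambda>k. h2 \<alpha> k y) m"
  shows "\<forall>y\<in>X. is_diag (D k y)"
proof (induction "nat k" arbitrary: k rule: less_induct)
  case less
  show ?case
  proof (cases "k \<le> 0")
    case True
    then show ?thesis
      using D(2,3) is_diag_zero by (cases "k = 0") (auto simp: vanishes_below_def)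
  next
    case False
    define m where "m = k - 1"
    have IH: "is_diag (D j y)" if "y \<in> X" "j \<le> m" for j y
      using less[of j] that False by (simp add: m_def)
    show ?thesis
    proof
      fix y assume y: "y \<in> X"
      have rhs: "is_diag (pd (D m) \<alpha> y + smul (\<lambda>k. h1 \<alpha> k y) (\<lambda>k. D k y) m
          - smul (\<lambda>k. D k y) (\<lambda>k. h2 \<alpha> k y) m)" for \<alpha>
        using pd_diag[OF D(1) IH y] y h IH D(2)
        by (intro is_diag_diff is_diag_add is_diag_smul[of 0 _ 0]) auto
      show "is_diag (D k y)"
        unfolding is_diag_def
      proof (intro allI impI)
        fix c d :: 'n assume "c \<noteq> d"
        then obtain \<alpha> where "E \<alpha> y $ c $ c \<noteq> E \<alpha> y $ d $ d" using sep y by blast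
        moreover have "(E \<alpha> y $ c $ c - E \<alpha> y $ d $ d) * D k y $ c $ d = 0"
          using eq[OF y, of \<alpha> m] rhs[of \<alpha>] \<open>c \<noteq> d\<close>
          by (simp add: m_def diag_commutator_nth[OF E, symmetric] is_diag_def)
        ultimately show "D k y $ c $ d = 0" by simp
      qed
    qed
  qed
qed

definition dressing_quotient ::
  "(int \<Rightarrow> complex^'n \<Rightarrow> ('n::finite) cmat) \<Rightarrow> (int \<Rightarrow> complex^'n \<Rightarrow> 'n cmat) \<Rightarrow> int \<Rightarrow> complex^'n \<Rightarrow> 'n cmat"
  where "dressing_quotient T1 T2 k y = smul (ser_rinv (\<lambda>l. T1 l y)) (\<lambda>l. T2 l y) k"

lemma dressing_quotient_props:
  assumes T1: "\<forall>k. holo_mat (T1 k) X" "\<forall>y\<in>X. vanishes_below 0 (\<lambda>k. T1 k y) \<and> T1 0 y = mat 1"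
    and T2: "\<forall>k. holo_mat (T2 k) X" "\<forall>y\<in>X. vanishes_below 0 (\<lambda>k. T2 k y) \<and> T2 0 y = mat 1"
    and y: "y \<in> X"
  defines "D \<equiv> dressing_quotient T1 T2"
  shows "holo_mat (D k) X" and "vanishes_below 0 (\<lambda>k. D k y)" and "D 0 y = mat 1"
    and "(\<lambda>k. T2 k y) = smul (\<lambda>k. T1 k y) (\<lambda>k. D k y)"
    and "pd (T2 k) \<alpha> y = smul (\<lambda>k. pd (T1 k) \<alpha> y) (\<lambda>k. D k y) k + smul (\<lambda>k. T1 k y) (\<lambda>k. pd (D k) \<alpha> y) k"
proof -
  have T1_holo: "holo_mat (T1 k) X" and T2_holo: "holo_mat (T2 k) X" for k
    using T1(1) T2(1) by blast+
  have T1_below: "vanishes_below 0 (\<lambda>k. T1 k y)" and T1_0: "T1 0 y = mat 1"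
    and T2_below: "vanishes_below 0 (\<lambda>k. T2 k y)" and T2_0: "T2 0 y = mat 1" if "y \<in> X" for y
    using T1(2) T2(2) that by blast+
  have D_below: "vanishes_below 0 (\<lambda>k. D k y)" if "y \<in> X" for y
    using vanishes_below_smul[OF vanishes_below_ser_rinv T2_below[OF that]] by (simp add: D_def dressing_quotient_def)
  have D_holo: "holo_mat (D k) X" for k
    unfolding D_def dressing_quotient_def
    by (intro holo_mat_smul[where N=0 and M=0] holo_mat_ser_rinv T1_holo T2_holo vanishes_below_ser_rinv T2_below)
  have T2_eq: "(\<lambda>k. T2 k y) = smul (\<lambda>k. T1 k y) (\<lambda>k. D k y)" if "y \<in> X" for y
  proof -
    have "smul (\<lambda>k. T1 k y) (smul (ser_rinv (\<lambda>k. T1 k y)) (\<lambda>k. T2 k y))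
        = smul (smul (\<lambda>k. T1 k y) (ser_rinv (\<lambda>k. T1 k y))) (\<lambda>k. T2 k y)"
      by (rule smul_assoc[OF T1_below[OF that] vanishes_below_ser_rinv T2_below[OF that], symmetric])
    then show ?thesis
      using T1_below[OF that] T1_0[OF that] by (simp add: D_def dressing_quotient_def smul_ser_rinv)
  qed
  show "holo_mat (D k) X" "vanishes_below 0 (\<lambda>k. D k y)" "(\<lambda>k. T2 k y) = smul (\<lambda>k. T1 k y) (\<lambda>k. D k y)"
    using D_holo D_below[OF y] T2_eq[OF y] .
  show "D 0 y = mat 1"
    using T2_0[OF y] by (simp add: D_def dressing_quotient_def smul_at_0 vanishes_below_ser_rinv T2_below y)
  have "has_partial (T2 k) \<alpha> y
      (smul (\<lambda>k. pd (T1 k) \<alpha> y) (\<lambda>k. D k y) k + smul (\<lambda>k. T1 k y) (\<lambda>k. pd (D k) \<alpha> y) k)"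
  proof (rule has_partial_cong[OF holo_mat_open[OF D_holo] y])
    show "has_partial (\<lambda>p. smul (\<lambda>k. T1 k p) (\<lambda>k. D k p) k) \<alpha> y
        (smul (\<lambda>k. pd (T1 k) \<alpha> y) (\<lambda>k. D k y) k + smul (\<lambda>k. T1 k y) (\<lambda>k. pd (D k) \<alpha> y) k)"
      by (rule has_partial_smul) (use T1_holo T1_below D_holo D_below y in auto)
  qed (use T2_eq in metis)
  then show "pd (T2 k) \<alpha> y
      = smul (\<lambda>k. pd (T1 k) \<alpha> y) (\<lambda>k. D k y) k + smul (\<lambda>k. T1 k y) (\<lambda>k. pd (D k) \<alpha> y) k"
    by (rule has_partial_imp_pd)
qed

lemma dressing_unique_up_to_diag:
  assumes d1: "dressing X Q E T1" and d2: "dressing X Q E T2"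
    and E: "\<And>\<alpha> y. is_diag (E \<alpha> y)"
    and sep: "\<And>y c d. y \<in> X \<Longrightarrow> c \<noteq> d \<Longrightarrow> \<exists>\<alpha>. E \<alpha> y $ c $ c \<noteq> E \<alpha> y $ d $ d"
    and y0: "y0 \<in> X"
  shows "\<exists>D. vanishes_below 0 D \<and> D 0 = mat 1 \<and> (\<forall>k. is_diag (D k))
    \<and> (\<lambda>k. T2 k y0) = smul (\<lambda>k. T1 k y0) D"
proof -
  obtain h1 where T1: "\<forall>k. holo_mat (T1 k) X" "\<forall>p\<in>X. vanishes_below 0 (\<lambda>k. T1 k p) \<and> T1 0 p = mat 1"
    and h1: "\<And>j k p. is_diag (h1 j k p)" "\<And>j p. vanishes_below 0 (\<lambda>k. h1 j k p)"
    and eq1: "\<And>j p k. p \<in> X \<Longrightarrow> pd (T1 k) j p + smul (pot (Q j p) (E j p)) (\<lambda>l. T1 l p) k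
       = smul (\<lambda>l. T1 l p) (\<lambda>l. pot 0 (E j p) l + h1 j l p) k"
    using d1 by (rule dressingE) blast
  obtain h2 where T2: "\<forall>k. holo_mat (T2 k) X" "\<forall>p\<in>X. vanishes_below 0 (\<lambda>k. T2 k p) \<and> T2 0 p = mat 1"
    and h2: "\<And>j k p. is_diag (h2 j k p)" "\<And>j p. vanishes_below 0 (\<lambda>k. h2 j k p)"
    and eq2: "\<And>j p k. p \<in> X \<Longrightarrow> pd (T2 k) j p + smul (pot (Q j p) (E j p)) (\<lambda>l. T2 l p) k
       = smul (\<lambda>l. T2 l p) (\<lambda>l. pot 0 (E j p) l + h2 j l p) k"
    using d2 by (rule dressingE) blast
  define D where "D = dressing_quotient T1 T2"
  note D = dressing_quotient_props[OF T1 T2, folded D_def]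
  have X: "open X" using T1(1) holo_mat_open by blast
  have "E \<alpha> y ** D (m + 1) y - D (m + 1) y ** E \<alpha> y
      = pd (D m) \<alpha> y + smul (\<lambda>k. h1 \<alpha> k y) (\<lambda>k. D k y) m - smul (\<lambda>k. D k y) (\<lambda>k. h2 \<alpha> k y) m"
    if y: "y \<in> X" for \<alpha> y m
  proof (rule dressing_factor_commutator[where dT="\<lambda>k. pd (T2 k) \<alpha> y"])
    show "vanishes_below 0 (\<lambda>k. T1 k y)" "T1 0 y = mat 1" using T1(2) y by blast+
    show "vanishes_below 0 (\<lambda>k. pd (T1 k) \<alpha> y)"
      using T1(2) y X by (auto simp: vanishes_below_def intro!: pd_eq_0)
    show "vanishes_below 0 (\<lambda>k. pd (D k) \<alpha> y)"
      using D(2) y X by (auto simp: vanishes_below_def intro!: pd_eq_0)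
    show "pd (T1 k) \<alpha> y + smul (pot (Q \<alpha> y) (E \<alpha> y)) (\<lambda>k. T1 k y) k
        = smul (\<lambda>k. T1 k y) (\<lambda>l. pot 0 (E \<alpha> y) l + h1 \<alpha> l y) k" for k
      by (rule eq1[OF y])
    show "pd (T2 k) \<alpha> y + smul (pot (Q \<alpha> y) (E \<alpha> y)) (smul (\<lambda>k. T1 k y) (\<lambda>k. D k y)) k
        = smul (smul (\<lambda>k. T1 k y) (\<lambda>k. D k y)) (\<lambda>l. pot 0 (E \<alpha> y) l + h2 \<alpha> l y) k" for k
      using eq2[OF y] by (simp add: D(4)[OF y, symmetric])
  qed (use D(2,5) y h1(2) h2(2) in auto)
  then have "\<forall>y\<in>X. is_diag (D k y)" for k
    by (intro gauge_commutator_imp_diag[OF D(1)[OF y0] D(2) _ h1(1) h2(1) h1(2) h2(2) E sep])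
      (simp_all add: D(3) is_diag_mat)
  then show ?thesis
    using D(2-4)[OF y0] y0 by (intro exI[of _ "\<lambda>k. D k y0"]) auto
qed

lemma det_nonzero_rows_differ:
  fixes A :: "'a::comm_ring_1^'n^'n"
  assumes "det A \<noteq> 0" "c \<noteq> d"
  shows "\<exists>\<alpha>. A $ c $ \<alpha> \<noteq> A $ d $ \<alpha>"
proof (rule ccontr)
  assume "\<not> ?thesis"
  then have "row c A = row d A" by (simp add: row_def vec_eq_iff)
  then show False using det_identical_rows[OF assms(2)] assms(1) by blast
qed

lemma phi_pullback:
  assumes dU: "dressing U q (\<lambda>i p. munit i) T" and dX: "dressing X (pullback u q) (Ax u) T'"
    and u: "\<forall>i. holo_n (\<lambda>x. u x $ i) X" and uX: "u ` X \<subseteq> U"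
    and J: "\<forall>x\<in>X. det (\<chi> i \<alpha>. jac u i \<alpha> x) \<noteq> 0"
    and b: "diag_poly_inv b" and y: "y \<in> X"
  shows "phi T' b y = phi T b (u y)"
proof -
  have dS: "dressing X (pullback u q) (Ax u) (\<lambda>k x. T k (u x))"
    using dressing_pullback[OF dU u uX] by (simp add: Ax_eq_pullback)
  have sep: "\<exists>\<alpha>. Ax u \<alpha> x $ c $ c \<noteq> Ax u \<alpha> x $ d $ d" if "x \<in> X" "c \<noteq> d" for x c d
    using det_nonzero_rows_differ[OF J[rule_format, OF that(1)] that(2)] by (simp add: Ax_def)
  have diag: "is_diag (Ax u \<alpha> x)" for \<alpha> x
    by (simp add: Ax_def is_diag_def)
  obtain D where D: "vanishes_below 0 D" "D 0 = mat 1" "\<And>k. is_diag (D k)"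
    "(\<lambda>k. T' k y) = smul (\<lambda>k. T k (u y)) D"
    using dressing_unique_up_to_diag[OF dS dX diag sep y] by blast
  obtain h where "\<And>p. p \<in> U \<Longrightarrow> T 0 p = mat 1" "\<And>p. p \<in> U \<Longrightarrow> vanishes_below 0 (\<lambda>k. T k p)"
    using dU by (rule dressingE) blast
  with y uX have "vanishes_below 0 (\<lambda>k. T k (u y))" "T 0 (u y) = mat 1" by auto
  then show ?thesis
    unfolding phi_def D(4) using conj_smul_diag_factor[OF _ _ D(1-3) b] by simp
qed

lemma holo_mat_phi:
  assumes dU: "dressing U Q E T" and b: "lbdd b"
  shows "holo_mat (\<lambda>p. phi T b p k) U"
proof -
  obtain h where T0: "\<And>p. p \<in> U \<Longrightarrow> T 0 p = mat 1"
    and T_below: "\<And>p. p \<in> U \<Longrightarrow> vanishes_below 0 (\<lambda>k. T k p)" and T_holo: "\<And>k. holo_mat (T k) U"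
    using dU by (rule dressingE) blast
  obtain N where bN: "vanishes_below N b" using b by (auto simp: lbdd_iff_vanishes_below)
  have U: "open U" using holo_mat_open T_holo by blast
  have Tb: "holo_mat (\<lambda>p. smul (\<lambda>k. T k p) b j) U" for j
    using holo_mat_smul[of T U 0 "\<lambda>k p. b k" N] T_holo T_below holo_mat_const[OF U] bN by auto
  have "holo_mat (\<lambda>p. smul (\<lambda>j. smul (\<lambda>k. T k p) b j) (\<lambda>k. ser_rinv (\<lambda>k. T k p) k) k) U"
    using vanishes_below_smul[OF T_below bN] vanishes_below_ser_rinv
    by (intro holo_mat_smul[where N="0 + N" and M=0] Tb holo_mat_ser_rinv T_holo) auto
  then show ?thesis
    by (rule holo_mat_cong) (simp add: phi_def sinv_eq_ser_rinv T_below T0)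
qed

lemma holo_mat_trunc0_phi:
  assumes "dressing U Q E T" "lbdd b"
  shows "holo_mat (\<lambda>p. trunc0 (phi T b p) k) U"
proof (cases "k \<le> 0")
  case True
  then show ?thesis using holo_mat_phi[OF assms] by (simp add: trunc0_def)
next
  case False
  have "open U" using assms(1) by (meson dressingE holo_mat_open)
  then show ?thesis using False holo_mat_const by (simp add: trunc0_def)
qed

section \<open>The flows\<close>

text \<open>The coefficients of the commutator [M, d/dp^j + A] at p.\<close>

definition bracket :: "(complex^'n \<Rightarrow> ('n::finite) ser) \<Rightarrow> 'n ser \<Rightarrow> 'n \<Rightarrow> complex^'n \<Rightarrow> 'n ser" where
  "bracket M A j p = (\<lambda>k. - pd (\<lambda>p'. M p' k) j p + smul (M p) A k - smul A (M p) k)"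

text \<open>The time derivative of a potential whose time dependence sits in its hbar^0 coefficient f
  is the Laurent series R.\<close>

definition evolves :: "(complex \<Rightarrow> ('n::finite) cmat) \<Rightarrow> 'n ser \<Rightarrow> complex \<Rightarrow> bool" where
  "evolves f R t \<longleftrightarrow>
     (\<forall>a c. ((\<lambda>s. f s $ a $ c) has_field_derivative R 0 $ a $ c) (at t)) \<and> (\<forall>k. k \<noteq> 0 \<longrightarrow> R k = 0)"

lemma flow_iff_evolves:
  "flow S Th Q E T b \<longleftrightarrow> (\<forall>j. \<forall>p\<in>S. \<forall>t\<in>Th.
     evolves (Q j p) (bracket (\<lambda>p'. trunc0 (phi (T t) b p')) (pot (Q j p t) (E j p)) j p) t)"
  by (simp add: flow_def evolves_def bracket_def Let_def)

lemma evolves_lincomb: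
  assumes "\<And>i. evolves (f i) (R i) t"
  shows "evolves (\<lambda>s. \<Sum>i\<in>UNIV. sc (c i) (f i s)) (\<lambda>k. \<Sum>i\<in>UNIV. sc (c i) (R i k)) t"
  unfolding evolves_def
proof (intro conjI allI impI)
  show "((\<lambda>s. (\<Sum>i\<in>UNIV. sc (c i) (f i s)) $ a $ b) has_field_derivative
      (\<Sum>i\<in>UNIV. sc (c i) (R i 0)) $ a $ b) (at t)" for a b
    using assms unfolding evolves_def by (simp add: sc_def sum_component) (intro DERIV_sum DERIV_cmult, blast)
  show "(\<Sum>i\<in>UNIV. sc (c i) (R i k)) = 0" if "k \<noteq> 0" for k
    using assms that by (simp add: evolves_def)
qed

lemma sum_inverse_combination:
  fixes C K :: "complex^'n^'n"
  assumes "C ** K = mat 1"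
  shows "(\<Sum>\<alpha>\<in>UNIV. K $ \<alpha> $ i * (\<Sum>j\<in>UNIV. C $ j $ \<alpha> * f j)) = f i"
proof -
  have "(\<Sum>\<alpha>\<in>UNIV. K $ \<alpha> $ i * (\<Sum>j\<in>UNIV. C $ j $ \<alpha> * f j))
      = (\<Sum>\<alpha>\<in>UNIV. \<Sum>j\<in>UNIV. C $ j $ \<alpha> * K $ \<alpha> $ i * f j)"
    by (simp add: sum_distrib_left algebra_simps)
  also have "\<dots> = (\<Sum>j\<in>UNIV. \<Sum>\<alpha>\<in>UNIV. C $ j $ \<alpha> * K $ \<alpha> $ i * f j)"
    by (rule sum.swap)
  also have "\<dots> = (\<Sum>j\<in>UNIV. (C ** K) $ j $ i * f j)"
    by (simp add: matrix_matrix_mult_def sum_distrib_right)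
  also have "\<dots> = (\<Sum>j\<in>UNIV. if j = i then f j else 0)"
    using assms by (intro sum.cong) (auto simp: mat_def)
  finally show ?thesis by simp
qed

lemma sum_sc_inverse_combination:
  fixes C K :: "complex^'n^'n" and F :: "'n \<Rightarrow> ('m::finite) cmat"
  assumes "C ** K = mat 1"
  shows "(\<Sum>\<alpha>\<in>UNIV. sc (K $ \<alpha> $ i) (\<Sum>j\<in>UNIV. sc (C $ j $ \<alpha>) (F j))) = F i"
  using sum_inverse_combination[OF assms, of i "\<lambda>j. F j $ a $ b" for a b]
  by (simp add: vec_eq_iff sc_def sum_component)

lemma evolves_lincomb_iff:
  fixes C :: "complex^'n^'n"
  assumes "invertible C"
  shows "(\<forall>i. evolves (f i) (R i) t) \<longleftrightarrow>
    (\<forall>\<alpha>. evolves (\<lambda>s. \<Sum>i\<in>UNIV. sc (C $ i $ \<alpha>) (f i s)) (\<lambda>k. \<Sum>i\<in>UNIV. sc (C $ i $ \<alpha>) (R i k)) t)"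
proof
  assume "\<forall>\<alpha>. evolves (\<lambda>s. \<Sum>i\<in>UNIV. sc (C $ i $ \<alpha>) (f i s)) (\<lambda>k. \<Sum>i\<in>UNIV. sc (C $ i $ \<alpha>) (R i k)) t"
  moreover obtain K where K: "C ** K = mat 1"
    using assms invertible_right_inverse by blast
  ultimately have ev: "evolves (\<lambda>s. \<Sum>\<alpha>\<in>UNIV. sc (K $ \<alpha> $ i) (\<Sum>j\<in>UNIV. sc (C $ j $ \<alpha>) (f j s)))
      (\<lambda>k. \<Sum>\<alpha>\<in>UNIV. sc (K $ \<alpha> $ i) (\<Sum>j\<in>UNIV. sc (C $ j $ \<alpha>) (R j k))) t" for i
    by - (rule evolves_lincomb, blast)
  show "\<forall>i. evolves (f i) (R i) t"
  proof
    fix i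
    have "(\<lambda>s. \<Sum>\<alpha>\<in>UNIV. sc (K $ \<alpha> $ i) (\<Sum>j\<in>UNIV. sc (C $ j $ \<alpha>) (f j s))) = f i"
      "(\<lambda>k. \<Sum>\<alpha>\<in>UNIV. sc (K $ \<alpha> $ i) (\<Sum>j\<in>UNIV. sc (C $ j $ \<alpha>) (R j k))) = R i"
      by (simp_all add: fun_eq_iff sum_sc_inverse_combination[OF K])
    then show "evolves (f i) (R i) t" using ev[of i] by simp
  qed
qed (simp add: evolves_lincomb)

lemma bracket_pullback:
  assumes M: "\<And>k. holo_mat (\<lambda>p. M p k) U" and u: "\<forall>j. holo_n (\<lambda>x. u x $ j) X"
    and uX: "u ` X \<subseteq> U" and MX: "\<And>x. x \<in> X \<Longrightarrow> MX x = M (u x)" and y: "y \<in> X"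
  shows "bracket MX (pot (pullback u Q \<alpha> y) (pullback u E \<alpha> y)) \<alpha> y k
    = (\<Sum>i\<in>UNIV. sc (jac u i \<alpha> y) (bracket M (pot (Q i (u y)) (E i (u y))) i (u y) k))"
proof -
  have X: "open X" using u by (auto simp: holo_n_def)
  have uy: "u y \<in> U" using uX y by blast
  have "has_partial (\<lambda>x. MX x k) \<alpha> y (\<Sum>i\<in>UNIV. sc (jac u i \<alpha> y) (pd (\<lambda>p. M p k) i (u y)))"
    by (rule has_partial_cong[OF X y _ has_partial_compose[OF M u y uy]]) (simp add: MX)
  then have "pd (\<lambda>x. MX x k) \<alpha> y = (\<Sum>i\<in>UNIV. sc (jac u i \<alpha> y) (pd (\<lambda>p. M p k) i (u y)))"
    by (rule has_partial_imp_pd)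
  then show ?thesis
    unfolding bracket_def pullback_def smul_pot_left smul_pot_right MX[OF y]
    by (simp add: sc_add sc_diff sc_minus sum.distrib sum_subtractf sum_negf matrix_sum_mult
        matrix_mult_sum sc_mult_left sc_mult_right)
qed

lemma Qx_eq_pullback: "Qx u q \<alpha> x t = pullback u (\<lambda>i p. q i p t) \<alpha> x"
  by (simp add: Qx_def pullback_def)

lemma bracket_phi_pullback:
  assumes dU: "dressing U q (\<lambda>i p. munit i) T" and dX: "dressing X (pullback u q) (Ax u) T'"
    and u: "\<forall>i. holo_n (\<lambda>x. u x $ i) X" and uX: "u ` X \<subseteq> U"
    and J: "\<forall>x\<in>X. det (\<chi> i \<alpha>. jac u i \<alpha> x) \<noteq> 0" and b: "diag_poly_inv b" and y: "y \<in> X"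
  shows "bracket (\<lambda>x. trunc0 (phi T' b x)) (pot (pullback u q \<alpha> y) (Ax u \<alpha> y)) \<alpha> y
    = (\<lambda>k. \<Sum>i\<in>UNIV. sc (jac u i \<alpha> y)
             (bracket (\<lambda>p. trunc0 (phi T b p)) (pot (q i (u y)) (munit i)) i (u y) k))"
proof
  fix k
  have "lbdd b" using b by (simp add: diag_poly_inv_def)
  then show "bracket (\<lambda>x. trunc0 (phi T' b x)) (pot (pullback u q \<alpha> y) (Ax u \<alpha> y)) \<alpha> y k
    = (\<Sum>i\<in>UNIV. sc (jac u i \<alpha> y)
        (bracket (\<lambda>p. trunc0 (phi T b p)) (pot (q i (u y)) (munit i)) i (u y) k))"
    unfolding Ax_eq_pullback
    by (rule bracket_pullback[OF holo_mat_trunc0_phi[OF dU] u uX _ y])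
      (simp add: phi_pullback[OF dU dX u uX J b])
qed

theorem mainTheorem5:
  fixes X U :: "(complex^'n) set" and Th :: "complex set"
    and u :: "complex^'n \<Rightarrow> complex^'n"
    and q :: "'n \<Rightarrow> complex^'n \<Rightarrow> complex \<Rightarrow> 'n cmat"
    and T T' :: "complex \<Rightarrow> int \<Rightarrow> complex^'n \<Rightarrow> 'n cmat"
    and b :: "'n ser"
  assumes "open X" and "connected X" and "open Th"
    and "\<forall>i. holo_n (\<lambda>x. u x $ i) X" and "inj_on u X" and "u ` X = U"
    and "\<forall>x\<in>X. det (\<chi> i \<alpha>. jac u i \<alpha> x) \<noteq> 0"
    and "\<forall>i. \<forall>t\<in>Th. holo_mat (\<lambda>p. q i p t) U"
    and "\<forall>t\<in>Th. commuting U (\<lambda>i p. q i p t) (\<lambda>i p. munit i)"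
    and "\<forall>t\<in>Th. dressing U (\<lambda>i p. q i p t) (\<lambda>i p. munit i) (T t)"
    and "\<forall>t\<in>Th. dressing X (\<lambda>\<alpha> x. Qx u q \<alpha> x t) (Ax u) (T' t)"
    and "diag_poly_inv b"
  shows "flow U Th q (\<lambda>i p. munit i) T b \<longleftrightarrow> flow X Th (Qx u q) (Ax u) T' b"
proof -
  note u = assms(4) and J = assms(7) and b = assms(12)
  have uX: "u ` X \<subseteq> U" using assms(6) by blast
  define RU where "RU i p t = bracket (\<lambda>p'. trunc0 (phi (T t) b p')) (pot (q i p t) (munit i)) i p"
    for i p t
  have RX: "bracket (\<lambda>x. trunc0 (phi (T' t) b x)) (pot (Qx u q \<alpha> y t) (Ax u \<alpha> y)) \<alpha> y
      = (\<lambda>k. \<Sum>i\<in>UNIV. sc (jac u i \<alpha> y) (RU i (u y) t k))" if "t \<in> Th" "y \<in> X" for \<alpha> y t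
  proof -
    have "dressing U (\<lambda>i p. q i p t) (\<lambda>i p. munit i) (T t)"
      "dressing X (pullback u (\<lambda>i p. q i p t)) (Ax u) (T' t)"
      using assms(10,11) that by (simp_all add: Qx_eq_pullback[abs_def])
    from bracket_phi_pullback[OF this u uX J b \<open>y \<in> X\<close>] show ?thesis
      unfolding RU_def Qx_eq_pullback .
  qed
  have inv: "invertible (\<chi> i \<alpha>. jac u i \<alpha> y)" if "y \<in> X" for y
    using J that by (simp add: invertible_det_nz)
  have "flow U Th q (\<lambda>i p. munit i) T b \<longleftrightarrow> (\<forall>y\<in>X. \<forall>t\<in>Th. \<forall>i. evolves (q i (u y)) (RU i (u y) t) t)"
    unfolding flow_iff_evolves RU_def using assms(6) by blast
  also have "\<dots> \<longleftrightarrow> (\<forall>y\<in>X. \<forall>t\<in>Th. \<forall>\<alpha>.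
      evolves (Qx u q \<alpha> y) (\<lambda>k. \<Sum>i\<in>UNIV. sc (jac u i \<alpha> y) (RU i (u y) t k)) t)"
  proof (intro ball_cong[OF refl])
    fix y t assume "y \<in> X"
    from evolves_lincomb_iff[OF inv[OF this]]
    show "(\<forall>i. evolves (q i (u y)) (RU i (u y) t) t) \<longleftrightarrow>
      (\<forall>\<alpha>. evolves (Qx u q \<alpha> y) (\<lambda>k. \<Sum>i\<in>UNIV. sc (jac u i \<alpha> y) (RU i (u y) t k)) t)"
      by (simp add: Qx_def[abs_def])
  qed
  also have "\<dots> \<longleftrightarrow> flow X Th (Qx u q) (Ax u) T' b"
    unfolding flow_iff_evolves by (auto simp: RX)
  finally show ?thesis .
qed

end
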